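(* Let $d, p_1, \ldots, p_d \in \mathbb{N}$ and set $p = p_1 + \cdots + p_d$. Let $\alpha \in (p-1,\infty)$ and let $\Sigma$ be a real symmetric positive definite $p\times p$ matrix. Let $\mathfrak{X}$ be a random $p\times p$ matrix with $\mathfrak{X} \sim \mathcal{W}_p(\alpha,\Sigma)$. Partition $\mathfrak{X}$ and $\Sigma$ conformally into $d\times d$ blocks $(\mathfrak{X}_{k\ell})_{1\le k,\ell\le d}$ and $(\Sigma_{k\ell})_{1\le k,\ell\le d}$, where the block $(k,\ell)$ has size $p_k\times p_\ell$. For each $i\in\{1,\ldots,d\}$, let $\mathfrak{X}_{1:i,1:i}$ (resp. $\Sigma_{1:i,1:i}$) denote the principal submatrix of $\mathfrak{X}$ (resp. $\Sigma$) composed of the blocks $(\mathfrak{X}_{k\ell})_{1\le k,\ell\le i}$ (resp. $(\Sigma_{k\ell})_{1\le k,\ell\le i}$). Then for all reals $\nu_1,\ldots,\nu_d\in[0,\infty)$, \[ \mathsf{E}\!\left(\prod_{i=1}^d |\mathfrak{X}_{1:i,1:i}|^{\nu_i}\right) = \prod_{i=1}^d |2 \Sigma_{1:i,1:i}|^{\nu_i} \frac{\Gamma_{p_i} \big(\alpha/2 - \sum_{k=1}^{i-1} p_k/2 + \sum_{k=i}^d \nu_k \big)}{\Gamma_{p_i} \big( \alpha/2 - \sum_{k=1}^{i-1} p_k/2 \big)}, \] with the convention that a sum over an empty set equals zero.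
   Context: $|\cdot|$ denotes the determinant and $\mathrm{etr}(\cdot)=\exp(\mathrm{tr}(\cdot))$. Let $\mathcal{S}_{++}^m$ denote the cone of real symmetric positive definite $m\times m$ matrices. For $m\in\mathbb{N}$ and real $\beta>(m-1)/2$, the multivariate gamma function is $\Gamma_m(\beta)=\int_{\mathcal{S}_{++}^m}|X|^{\beta-(m+1)/2}\,\mathrm{etr}(-X)\,\mathrm{d}X$. For $\alpha\in(p-1,\infty)$ and $\Sigma\in\mathcal{S}_{++}^p$, $\mathfrak{X}\sim\mathcal{W}_p(\alpha,\Sigma)$ (Wishart distribution) means that $\mathfrak{X}$ is a random matrix in $\mathcal{S}_{++}^p$ with probability density (with respect to Lebesgue measure on the independent entries of symmetric matrices) $f_{\alpha,\Sigma}(X)=|X|^{\alpha/2-(p+1)/2}\,\mathrm{etr}\{-(\Sigma^{-1}/2)X\}\big/\big(|2\Sigma|^{\alpha/2}\Gamma_p(\alpha/2)\big)$ for $X\in\mathcal{S}_{++}^p$. *)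

theory Defs
  imports "HOL-Probability.Probability" "Jordan_Normal_Form.Gauss_Jordan_Elimination"
    "Jordan_Normal_Form.Determinant"
begin

(* Index set of the independent entries (upper triangle incl. diagonal) of a symmetric m x m matrix *)
definition sym_idx :: "nat \<Rightarrow> (nat \<times> nat) set" where
  "sym_idx m = {(i, j). i \<le> j \<and> j < m}"

definition sym_lebesgue :: "nat \<Rightarrow> ((nat \<times> nat) \<Rightarrow> real) measure" where
  "sym_lebesgue m = PiM (sym_idx m) (\<lambda>_. lborel)"

definition sym_of :: "nat \<Rightarrow> ((nat \<times> nat) \<Rightarrow> real) \<Rightarrow> real mat" where
  "sym_of m x = mat m m (\<lambda>(i, j). if i \<le> j then x (i, j) else x (j, i))"

definition mat_trace :: "real mat \<Rightarrow> real" where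
  "mat_trace A = (\<Sum>i<dim_row A. A $$ (i, i))"

definition etr :: "real mat \<Rightarrow> real" where
  "etr A = exp (mat_trace A)"

definition inv_mat :: "real mat \<Rightarrow> real mat" where
  "inv_mat A = the (mat_inverse A)"

definition pos_def_mat :: "nat \<Rightarrow> real mat \<Rightarrow> bool" where
  "pos_def_mat m A \<longleftrightarrow> A \<in> carrier_mat m m \<and> transpose_mat A = A \<and>
     (\<forall>v \<in> carrier_vec m. v \<noteq> 0\<^sub>v m \<longrightarrow> v \<bullet> (A *\<^sub>v v) > 0)"

definition spd_set :: "nat \<Rightarrow> ((nat \<times> nat) \<Rightarrow> real) set" where
  "spd_set m = {x \<in> space (sym_lebesgue m). pos_def_mat m (sym_of m x)}"

definition multigamma :: "nat \<Rightarrow> real \<Rightarrow> real" where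
  "multigamma m \<beta> = (\<integral>x. indicator (spd_set m) x *
      (det (sym_of m x) powr (\<beta> - (real m + 1) / 2) * etr (- sym_of m x)) \<partial>sym_lebesgue m)"

definition wishart_density :: "nat \<Rightarrow> real \<Rightarrow> real mat \<Rightarrow> ((nat \<times> nat) \<Rightarrow> real) \<Rightarrow> real" where
  "wishart_density p \<alpha> \<Sigma> x = indicator (spd_set p) x *
     (det (sym_of p x) powr (\<alpha> / 2 - (real p + 1) / 2) *
      etr (- ((1 / 2) \<cdot>\<^sub>m inv_mat \<Sigma>) * sym_of p x)
      / (det (2 \<cdot>\<^sub>m \<Sigma>) powr (\<alpha> / 2) * multigamma p (\<alpha> / 2)))"

(* X ~ W_p(alpha, Sigma): X is a random symmetric matrix (given by its independent entries)
   with density f_{alpha,Sigma} w.r.t. Lebesgue measure on the independent entries *)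
definition wishart_distributed ::
    "'a measure \<Rightarrow> nat \<Rightarrow> real \<Rightarrow> real mat \<Rightarrow> ('a \<Rightarrow> (nat \<times> nat) \<Rightarrow> real) \<Rightarrow> bool" where
  "wishart_distributed M p \<alpha> \<Sigma> X \<longleftrightarrow>
     distributed M (sym_lebesgue p) X (\<lambda>x. ennreal (wishart_density p \<alpha> \<Sigma> x))"

definition lead_submat :: "nat \<Rightarrow> real mat \<Rightarrow> real mat" where
  "lead_submat n A = mat n n (\<lambda>(i, j). A $$ (i, j))"

end

(* With Sigma' = 2 Sigma and S = Sigma'^-1, the Wishart density is proportional to
   |X|^(alpha/2 - (p+1)/2) etr(-S X), so the expectation reduces to integrals

     int_{X in S_++^p} prod_i |X_{1:k_i}|^nu_i |X|^(beta - (p+1)/2) etr(-S X) dX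
       = pi^(p(p-1)/4) prod_{m=1..p} Gamma(beta + sum_{k_i >= m} nu_i - (m-1)/2)
         |Sigma'|^beta prod_i |Sigma'_{1:k_i}|^nu_i,

   which are computed by induction on p.  Writing X = [[A, b], [b^T, t]], one has
   |X| = |A| (t - b^T A^-1 b), and completing the square in b splits tr(S X) into tr(S' A),
   a Gaussian quadratic form in b and a multiple of t - b^T A^-1 b; here S' is the Schur
   complement of the last diagonal entry of S, whose inverse is the leading block of Sigma'.
   Integrating out t (a Gamma integral) and then b (a Gaussian integral) leaves the same
   integral in dimension p - 1.  With no minors this evaluates Gamma_p, and grouping the
   factors m = 1..p along the blocks of the partition gives the theorem. *)

theory Submission
  imports Defs
begin

section \<open>Quadratic forms and positive definiteness\<close>

text \<open>Vectors are plain functions \<open>nat \<Rightarrow> real\<close> of which only the first \<open>n\<close> entries matter;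
  this makes them directly usable as points of the product measures below.\<close>

definition quad_form :: "nat \<Rightarrow> real mat \<Rightarrow> (nat \<Rightarrow> real) \<Rightarrow> real" where
  "quad_form n A v = (\<Sum>i<n. \<Sum>j<n. A $$ (i,j) * v i * v j)"

definition mat_vec :: "nat \<Rightarrow> real mat \<Rightarrow> (nat \<Rightarrow> real) \<Rightarrow> nat \<Rightarrow> real" where
  "mat_vec n A v i = (\<Sum>j<n. A $$ (i,j) * v j)"

lemma quad_form_cong: "(\<And>i. i < n \<Longrightarrow> v i = u i) \<Longrightarrow> quad_form n A v = quad_form n A u"
  by (simp add: quad_form_def)

lemma quad_form_eq_sum_mat_vec: "quad_form n A v = (\<Sum>i<n. v i * mat_vec n A v i)"
  by (simp add: quad_form_def mat_vec_def sum_distrib_left ac_simps)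

lemma quad_form_smult: "A \<in> carrier_mat n n \<Longrightarrow> quad_form n (c \<cdot>\<^sub>m A) v = c * quad_form n A v"
  by (simp add: quad_form_def sum_distrib_left ac_simps)

lemma index_mult_mat_lessThan:
  assumes "A \<in> carrier_mat m n" "B \<in> carrier_mat n k" "i < m" "j < k"
  shows "(A * B) $$ (i,j) = (\<Sum>l<n. A $$ (i,l) * B $$ (l,j))"
  using assms by (simp add: scalar_prod_def atLeast0LessThan)

lemma mat_vec_mult:
  assumes "A \<in> carrier_mat n n" "B \<in> carrier_mat n n" "i < n"
  shows "mat_vec n A (mat_vec n B v) i = mat_vec n (A * B) v i"
proof -
  have "mat_vec n A (mat_vec n B v) i = (\<Sum>j<n. \<Sum>l<n. A $$ (i,j) * B $$ (j,l) * v l)"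
    by (simp add: mat_vec_def sum_distrib_left ac_simps)
  also have "\<dots> = (\<Sum>l<n. \<Sum>j<n. A $$ (i,j) * B $$ (j,l) * v l)"
    by (rule sum.swap)
  also have "\<dots> = (\<Sum>l<n. (A * B) $$ (i,l) * v l)"
    using assms by (simp add: index_mult_mat_lessThan sum_distrib_right del: index_mult_mat)
  finally show ?thesis by (simp add: mat_vec_def)
qed

lemma mat_vec_one: "i < n \<Longrightarrow> mat_vec n (1\<^sub>m n) v i = v i"
  by (simp add: mat_vec_def if_distrib[of "\<lambda>x. x * _"] sum.delta cong: if_cong)

lemma mat_vec_inverse:
  assumes "A \<in> carrier_mat n n" "B \<in> carrier_mat n n" "A * B = 1\<^sub>m n" "i < n"
  shows "mat_vec n A (mat_vec n B v) i = v i"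
  using assms by (simp add: mat_vec_mult mat_vec_one)

lemma sum_mat_vec_swap:
  assumes "\<And>i j. i < n \<Longrightarrow> j < n \<Longrightarrow> A $$ (i,j) = A $$ (j,i)"
  shows "(\<Sum>i<n. u i * mat_vec n A v i) = (\<Sum>i<n. v i * mat_vec n A u i)"
proof -
  have "(\<Sum>i<n. u i * mat_vec n A v i) = (\<Sum>i<n. \<Sum>j<n. u i * A $$ (i,j) * v j)"
    by (simp add: mat_vec_def sum_distrib_left mult.assoc)
  also have "\<dots> = (\<Sum>j<n. \<Sum>i<n. u i * A $$ (i,j) * v j)"
    by (rule sum.swap)
  also have "\<dots> = (\<Sum>i<n. v i * mat_vec n A u i)"
    using assms by (auto simp: mat_vec_def sum_distrib_left ac_simps intro!: sum.cong)
  finally show ?thesis .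
qed

lemma quad_form_add_scaled:
  assumes "\<And>i j. i < n \<Longrightarrow> j < n \<Longrightarrow> A $$ (i,j) = A $$ (j,i)"
  shows "quad_form n A (\<lambda>i. v i + t * u i)
    = quad_form n A v + 2 * t * (\<Sum>i<n. v i * mat_vec n A u i) + t\<^sup>2 * quad_form n A u"
proof -
  have lin: "mat_vec n A (\<lambda>i. v i + t * u i) j = mat_vec n A v j + t * mat_vec n A u j" for j
    by (simp add: mat_vec_def sum.distrib sum_distrib_left algebra_simps)
  have "quad_form n A (\<lambda>i. v i + t * u i) = (\<Sum>i<n. v i * mat_vec n A v i)
      + t * (\<Sum>i<n. v i * mat_vec n A u i) + t * (\<Sum>i<n. u i * mat_vec n A v i)
      + t\<^sup>2 * (\<Sum>i<n. u i * mat_vec n A u i)"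
    by (simp add: quad_form_eq_sum_mat_vec lin algebra_simps sum.distrib sum_distrib_left
        power2_eq_square)
  also have "(\<Sum>i<n. u i * mat_vec n A v i) = (\<Sum>i<n. v i * mat_vec n A u i)"
    by (rule sum_mat_vec_swap[OF assms])
  finally show ?thesis by (simp add: quad_form_eq_sum_mat_vec algebra_simps)
qed

lemma quad_form_Suc:
  assumes "\<And>i. i < n \<Longrightarrow> A $$ (n,i) = A $$ (i,n)"
  shows "quad_form (Suc n) A v
    = quad_form n (lead_submat n A) v + 2 * v n * (\<Sum>i<n. A $$ (i,n) * v i) + A $$ (n,n) * (v n)\<^sup>2"
proof -
  have "(\<Sum>j<n. A $$ (n,j) * v n * v j) = (\<Sum>j<n. A $$ (j,n) * v n * v j)"
    using assms by (intro sum.cong) auto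
  then show ?thesis
    by (simp add: quad_form_def lead_submat_def sum.distrib sum_distrib_left sum_distrib_right
        power2_eq_square algebra_simps)
qed

lemma scalar_prod_mult_mat_vec_quad_form:
  assumes "A \<in> carrier_mat n n" "w \<in> carrier_vec n"
  shows "w \<bullet> (A *\<^sub>v w) = quad_form n A (\<lambda>i. w $ i)"
  using assms by (auto simp: scalar_prod_def quad_form_def sum_distrib_left atLeast0LessThan
      ac_simps intro!: sum.cong)

lemma pos_def_mat_iff_quad_form:
  "pos_def_mat n A \<longleftrightarrow> A \<in> carrier_mat n n \<and> transpose_mat A = A \<and>
     (\<forall>v. (\<exists>i<n. v i \<noteq> 0) \<longrightarrow> quad_form n A v > 0)"
proof -
  have "(\<exists>i<n. v $ i \<noteq> 0) \<longleftrightarrow> v \<noteq> 0\<^sub>v n" if "v \<in> carrier_vec n" for v :: "real vec"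
    using that by (auto intro!: eq_vecI)
  moreover have "vec n v \<in> carrier_vec n \<and> (\<forall>i<n. vec n v $ i = v i)" for v
    by simp
  ultimately show ?thesis
    unfolding pos_def_mat_def
    by (smt (verit) quad_form_cong scalar_prod_mult_mat_vec_quad_form)
qed

lemma index_sym_mat:
  "transpose_mat A = A \<Longrightarrow> A \<in> carrier_mat n n \<Longrightarrow> i < n \<Longrightarrow> j < n \<Longrightarrow> A $$ (i,j) = A $$ (j,i)"
  by (metis carrier_matD index_transpose_mat(1))

lemma pos_def_mat_symmetric: "pos_def_mat n A \<Longrightarrow> i < n \<Longrightarrow> j < n \<Longrightarrow> A $$ (i,j) = A $$ (j,i)"
  unfolding pos_def_mat_def by (auto intro: index_sym_mat)

lemma pos_def_mat_quad_form_nonneg: "pos_def_mat n A \<Longrightarrow> quad_form n A v \<ge> 0"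
  by (cases "\<exists>i<n. v i \<noteq> 0") (auto simp: pos_def_mat_iff_quad_form quad_form_def less_imp_le)

lemma pos_def_mat_smult:
  assumes "pos_def_mat n A" "c > 0"
  shows "pos_def_mat n (c \<cdot>\<^sub>m A)"
  using assms pos_def_mat_symmetric[OF assms(1)]
  by (auto simp: pos_def_mat_iff_quad_form quad_form_smult intro!: eq_matI)

lemma pos_def_mat_one: "pos_def_mat n (1\<^sub>m n)"
  unfolding pos_def_mat_iff_quad_form
proof (intro conjI allI impI)
  fix v :: "nat \<Rightarrow> real"
  assume "\<exists>i<n. v i \<noteq> 0"
  then obtain i where "i < n" "v i \<noteq> 0" by auto
  then have "0 < v i * v i" by (metis not_real_square_gt_zero)
  also have "\<dots> \<le> (\<Sum>j<n. v j * v j)" using \<open>i < n\<close> by (intro member_le_sum) auto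
  finally show "quad_form n (1\<^sub>m n) v > 0" by (simp add: quad_form_eq_sum_mat_vec mat_vec_one)
qed auto

section \<open>Determinants of bordered matrices\<close>

lemma lead_submat_carrier [simp]: "lead_submat k A \<in> carrier_mat k k"
  by (simp add: lead_submat_def)

lemma lead_submat_dim [simp]: "dim_row (lead_submat k A) = k" "dim_col (lead_submat k A) = k"
  by (simp_all add: lead_submat_def)

lemma index_lead_submat [simp]: "i < k \<Longrightarrow> j < k \<Longrightarrow> lead_submat k A $$ (i,j) = A $$ (i,j)"
  by (simp add: lead_submat_def)

lemma lead_submat_lead_submat: "k \<le> m \<Longrightarrow> lead_submat k (lead_submat m A) = lead_submat k A"
  by (auto simp: lead_submat_def intro!: eq_matI)

lemma lead_submat_id: "A \<in> carrier_mat n n \<Longrightarrow> lead_submat n A = A"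
  by (auto simp: lead_submat_def intro!: eq_matI)

lemma det_dim_zero: "A \<in> carrier_mat 0 0 \<Longrightarrow> det A = 1"
  by (metis det_one eq_matI carrier_matD(1,2) index_one_mat(2,3) less_nat_zero_code)

lemma inv_mat_inverse:
  assumes "A \<in> carrier_mat n n" "det A \<noteq> 0"
  shows "inv_mat A \<in> carrier_mat n n" "A * inv_mat A = 1\<^sub>m n" "inv_mat A * A = 1\<^sub>m n"
proof -
  have "A \<in> Units (ring_mat TYPE(real) n ())"
    by (rule det_non_zero_imp_unit[OF assms])
  then obtain B where "mat_inverse A = Some B"
    using mat_inverse(1)[OF assms(1), of "()"] by fastforce
  with mat_inverse(2)[OF assms(1)]
  show "inv_mat A \<in> carrier_mat n n" "A * inv_mat A = 1\<^sub>m n" "inv_mat A * A = 1\<^sub>m n"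
    by (auto simp: inv_mat_def)
qed

lemma det_last_row_zero:
  assumes "B \<in> carrier_mat (Suc n) (Suc n)" "\<And>j. j < n \<Longrightarrow> B $$ (n,j) = 0"
  shows "det B = B $$ (n,n) * det (lead_submat n B)"
proof -
  have "det B = (\<Sum>j<Suc n. B $$ (n,j) * cofactor B n j)"
    by (rule laplace_expansion_row[OF assms(1)]) simp
  also have "\<dots> = B $$ (n,n) * det (mat_delete B n n)"
    using assms(2) by (simp add: cofactor_def)
  also have "mat_delete B n n = lead_submat n B"
    using assms(1) by (auto simp: mat_delete_def lead_submat_def intro!: eq_matI)
  finally show ?thesis .
qed

lemma det_unit_lower_triangular:
  assumes "L \<in> carrier_mat n n" "\<And>i j. i < j \<Longrightarrow> j < n \<Longrightarrow> L $$ (i,j) = 0"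
    and "\<And>i. i < n \<Longrightarrow> L $$ (i,i) = 1"
  shows "det L = (1::real)"
proof -
  have "det L = prod_list (diag_mat L)" by (rule det_lower_triangular[OF assms(2,1)])
  also have "\<dots> = (\<Prod>i = 0..<n. L $$ (i,i))" using assms(1) by (simp add: prod_list_diag_prod)
  finally show ?thesis using assms(3) by simp
qed

lemma det_last_row_minus_combination:
  fixes X :: "real mat" and w :: "nat \<Rightarrow> real"
  assumes X: "X \<in> carrier_mat (Suc n) (Suc n)"
  shows "det (mat (Suc n) (Suc n)
      (\<lambda>(i,j). if i = n then X $$ (n,j) - (\<Sum>k<n. w k * X $$ (k,j)) else X $$ (i,j))) = det X"
proof -
  define U where "U = mat (Suc n) (Suc n) (\<lambda>(i,j). if i = j then 1 else if i = n then - w j else 0)"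
  have U: "U \<in> carrier_mat (Suc n) (Suc n)" by (simp add: U_def)
  have "(U * X) $$ (i,j) = (if i = n then X $$ (n,j) - (\<Sum>k<n. w k * X $$ (k,j)) else X $$ (i,j))"
    if ij: "i < Suc n" "j < Suc n" for i j
  proof -
    have UX: "(U * X) $$ (i,j) = (\<Sum>k<n. U $$ (i,k) * X $$ (k,j)) + U $$ (i,n) * X $$ (n,j)"
      using ij by (simp add: index_mult_mat_lessThan[OF U X] del: index_mult_mat)
    show ?thesis
    proof (cases "i = n")
      case True
      then have "(\<Sum>k<n. U $$ (i,k) * X $$ (k,j)) = - (\<Sum>k<n. w k * X $$ (k,j))"
        by (auto simp: U_def sum_negf intro!: sum.cong)
      with UX True show ?thesis by (simp add: U_def)
    next
      case False
      then have "(\<Sum>k<n. U $$ (i,k) * X $$ (k,j)) = (\<Sum>k<n. if i = k then X $$ (i,j) else 0)"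
        using ij by (intro sum.cong) (auto simp: U_def)
      also have "\<dots> = X $$ (i,j)" using False ij by (simp add: sum.delta)
      finally show ?thesis using UX False ij by (simp add: U_def)
    qed
  qed
  then have "U * X = mat (Suc n) (Suc n)
      (\<lambda>(i,j). if i = n then X $$ (n,j) - (\<Sum>k<n. w k * X $$ (k,j)) else X $$ (i,j))"
    using U X by (auto intro!: eq_matI)
  then show ?thesis
    using det_mult[OF U X] det_unit_lower_triangular[OF U] by (simp add: U_def)
qed

definition schur_compl :: "nat \<Rightarrow> real mat \<Rightarrow> real mat" where
  "schur_compl n Q = mat n n (\<lambda>(i,j). Q $$ (i,j) - Q $$ (i,n) * Q $$ (n,j) / Q $$ (n,n))"

lemma schur_compl_carrier [simp]: "schur_compl n Q \<in> carrier_mat n n"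
  by (simp add: schur_compl_def)

lemma det_schur_compl:
  assumes Q: "Q \<in> carrier_mat (Suc n) (Suc n)" and q: "Q $$ (n,n) \<noteq> 0"
  shows "det Q = Q $$ (n,n) * det (schur_compl n Q)"
proof -
  define L where "L = mat (Suc n) (Suc n)
    (\<lambda>(i,j). if i = j then 1 else if i = n then - Q $$ (n,j) / Q $$ (n,n) else (0::real))"
  have L: "L \<in> carrier_mat (Suc n) (Suc n)" by (simp add: L_def)
  have QL: "(Q * L) $$ (i,j) =
      (if j = n then Q $$ (i,n) else Q $$ (i,j) - Q $$ (i,n) * Q $$ (n,j) / Q $$ (n,n))"
    if "i < Suc n" "j < Suc n" for i j
  proof -
    have "(\<Sum>k<n. Q $$ (i,k) * L $$ (k,j)) = (\<Sum>k<n. if k = j then Q $$ (i,j) else 0)"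
      using that by (intro sum.cong) (auto simp: L_def)
    then show ?thesis
      using that q by (simp add: index_mult_mat_lessThan[OF Q L] sum.delta' del: index_mult_mat)
        (auto simp: L_def)
  qed
  have "det Q = det (Q * L)"
    using det_mult[OF Q L] det_unit_lower_triangular[OF L] by (simp add: L_def)
  also have "\<dots> = (Q * L) $$ (n,n) * det (lead_submat n (Q * L))"
    using Q L q by (intro det_last_row_zero) (simp_all add: QL del: index_mult_mat)
  also have "lead_submat n (Q * L) = schur_compl n Q"
    by (auto simp: lead_submat_def schur_compl_def QL intro!: eq_matI)
  finally show ?thesis using QL[of n n] by simp
qed

definition lead_schur_compl :: "nat \<Rightarrow> real mat \<Rightarrow> real" where
  "lead_schur_compl n X = X $$ (n,n) - quad_form n (inv_mat (lead_submat n X)) (\<lambda>i. X $$ (i,n))"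

context
  fixes n :: nat and X :: "real mat"
  assumes X: "X \<in> carrier_mat (Suc n) (Suc n)" and X_sym: "transpose_mat X = X"
    and det_lead: "det (lead_submat n X) \<noteq> 0"
begin

lemma det_lead_schur_compl: "det X = det (lead_submat n X) * lead_schur_compl n X"
proof -
  define B where "B = inv_mat (lead_submat n X)"
  note B = inv_mat_inverse[OF lead_submat_carrier det_lead, folded B_def]
  define w where "w j = (\<Sum>i<n. X $$ (n,i) * B $$ (i,j))" for j
  define Y where "Y = mat (Suc n) (Suc n)
    (\<lambda>(i,j). if i = n then X $$ (n,j) - (\<Sum>k<n. w k * X $$ (k,j)) else X $$ (i,j))"
  have B_left: "(\<Sum>k<n. B $$ (i,k) * X $$ (k,j)) = (if i = j then 1 else 0)"
    if "i < n" "j < n" for i j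
    using arg_cong[OF B(3), of "\<lambda>M. M $$ (i,j)"] that
    by (simp add: index_mult_mat_lessThan[OF B(1) lead_submat_carrier] del: index_mult_mat)
  have w_X: "(\<Sum>k<n. w k * X $$ (k,j)) = (\<Sum>i<n. \<Sum>k<n. X $$ (n,i) * B $$ (i,k) * X $$ (k,j))"
    for j
  proof -
    have "(\<Sum>k<n. w k * X $$ (k,j)) = (\<Sum>k<n. \<Sum>i<n. X $$ (n,i) * B $$ (i,k) * X $$ (k,j))"
      by (simp add: w_def sum_distrib_right)
    also have "\<dots> = (\<Sum>i<n. \<Sum>k<n. X $$ (n,i) * B $$ (i,k) * X $$ (k,j))"
      by (rule sum.swap)
    finally show ?thesis .
  qed
  have "det X = det Y"
    unfolding Y_def by (rule det_last_row_minus_combination[OF X, symmetric])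
  also have "\<dots> = Y $$ (n,n) * det (lead_submat n Y)"
  proof (rule det_last_row_zero)
    fix j assume "j < n"
    then have "(\<Sum>k<n. w k * X $$ (k,j)) = X $$ (n,j)"
      by (simp add: w_X mult.assoc sum_distrib_left[symmetric] B_left if_distrib sum.delta
          cong: if_cong)
    then show "Y $$ (n,j) = 0" using \<open>j < n\<close> by (simp add: Y_def)
  qed (simp add: Y_def)
  also have "lead_submat n Y = lead_submat n X"
    by (auto simp: lead_submat_def Y_def intro!: eq_matI)
  also have "Y $$ (n,n) = lead_schur_compl n X"
    using index_sym_mat[OF X_sym X]
    by (simp add: Y_def w_X lead_schur_compl_def quad_form_def B_def ac_simps)
  finally show ?thesis by simp
qed

lemma quad_form_lead_schur_compl:
  "quad_form (Suc n) X v = quad_form n (lead_submat n X) (\<lambda>i. v i + v n * u i)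
     + lead_schur_compl n X * (v n)\<^sup>2"
  if "u = mat_vec n (inv_mat (lead_submat n X)) (\<lambda>i. X $$ (i,n))"
proof -
  note B = inv_mat_inverse[OF lead_submat_carrier det_lead]
  have Au: "mat_vec n (lead_submat n X) u i = X $$ (i,n)" if "i < n" for i
    using mat_vec_inverse[OF lead_submat_carrier B(1,2) that] \<open>u = _\<close> by simp
  have "quad_form n (lead_submat n X) (\<lambda>i. v i + v n * u i) =
      quad_form n (lead_submat n X) v + 2 * v n * (\<Sum>i<n. v i * mat_vec n (lead_submat n X) u i)
      + (v n)\<^sup>2 * quad_form n (lead_submat n X) u"
    using index_sym_mat[OF X_sym X] by (intro quad_form_add_scaled) simp
  also have "(\<Sum>i<n. v i * mat_vec n (lead_submat n X) u i) = (\<Sum>i<n. X $$ (i,n) * v i)"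
    by (simp add: Au mult.commute)
  also have "quad_form n (lead_submat n X) u = (\<Sum>i<n. u i * X $$ (i,n))"
    by (simp add: quad_form_eq_sum_mat_vec Au)
  also have "\<dots> = quad_form n (inv_mat (lead_submat n X)) (\<lambda>i. X $$ (i,n))"
    using \<open>u = _\<close> by (simp add: quad_form_eq_sum_mat_vec mult.commute)
  finally show ?thesis
    using quad_form_Suc[of n X v] index_sym_mat[OF X_sym X]
    by (simp add: lead_schur_compl_def algebra_simps)
qed

lemma pos_def_mat_Suc_iff:
  assumes "pos_def_mat n (lead_submat n X)"
  shows "pos_def_mat (Suc n) X \<longleftrightarrow> lead_schur_compl n X > 0"
proof
  define u where "u = mat_vec n (inv_mat (lead_submat n X)) (\<lambda>i. X $$ (i,n))"
  note identity = quad_form_lead_schur_compl[OF u_def]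
  {
    assume "pos_def_mat (Suc n) X"
    define v :: "nat \<Rightarrow> real" where "v i = (if i < n then - u i else 1)" for i
    have "\<exists>i<Suc n. v i \<noteq> 0" by (auto simp: v_def intro!: exI[of _ n])
    then have "0 < quad_form (Suc n) X v"
      using \<open>pos_def_mat (Suc n) X\<close> unfolding pos_def_mat_iff_quad_form by blast
    also have "\<dots> = quad_form n (lead_submat n X) (\<lambda>i. v i + v n * u i)
        + lead_schur_compl n X * (v n)\<^sup>2"
      by (rule identity)
    also have "quad_form n (lead_submat n X) (\<lambda>i. v i + v n * u i) = quad_form n (lead_submat n X) (\<lambda>_. 0)"
      by (rule quad_form_cong) (simp add: v_def)
    finally show "lead_schur_compl n X > 0" by (simp add: quad_form_def v_def)
  next
    assume "lead_schur_compl n X > 0"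
    show "pos_def_mat (Suc n) X"
      unfolding pos_def_mat_iff_quad_form
    proof (intro conjI allI impI X X_sym)
      fix v :: "nat \<Rightarrow> real"
      assume nz: "\<exists>i<Suc n. v i \<noteq> 0"
      show "quad_form (Suc n) X v > 0"
      proof (cases "v n = 0")
        case True
        with nz obtain i where "i < n" "v i \<noteq> 0" using less_Suc_eq by auto
        with assms True show ?thesis by (auto simp: identity pos_def_mat_iff_quad_form)
      next
        case False
        have "0 \<le> quad_form n (lead_submat n X) (\<lambda>i. v i + v n * u i)"
          by (rule pos_def_mat_quad_form_nonneg[OF assms])
        moreover have "lead_schur_compl n X * (v n)\<^sup>2 > 0"
          using \<open>lead_schur_compl n X > 0\<close> False by simp
        ultimately show ?thesis by (simp add: identity)
      qed
    qed
  }
qed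

end

section \<open>Sylvester's criterion\<close>

lemma pos_def_mat_lead_submat:
  assumes "pos_def_mat m X" "k \<le> m"
  shows "pos_def_mat k (lead_submat k X)"
  unfolding pos_def_mat_iff_quad_form
proof (intro conjI allI impI)
  show "transpose_mat (lead_submat k X) = lead_submat k X"
    using pos_def_mat_symmetric[OF assms(1)] assms(2) by (auto intro!: eq_matI)
  fix v :: "nat \<Rightarrow> real"
  assume "\<exists>i<k. v i \<noteq> 0"
  define w :: "nat \<Rightarrow> real" where "w i = (if i < k then v i else 0)" for i
  have "\<exists>i<m. w i \<noteq> 0" using \<open>\<exists>i<k. v i \<noteq> 0\<close> assms(2) by (auto simp: w_def)
  then have "0 < quad_form m X w" using assms(1) unfolding pos_def_mat_iff_quad_form by blast
  also have "quad_form m X w = (\<Sum>i<k. \<Sum>j<m. X $$ (i,j) * w i * w j)"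
    unfolding quad_form_def using assms(2) by (intro sum.mono_neutral_right) (auto simp: w_def)
  also have "\<dots> = (\<Sum>i<k. \<Sum>j<k. X $$ (i,j) * w i * w j)"
    using assms(2) by (intro sum.cong refl sum.mono_neutral_right) (auto simp: w_def)
  also have "\<dots> = quad_form k (lead_submat k X) v" by (simp add: quad_form_def w_def)
  finally show "quad_form k (lead_submat k X) v > 0" .
qed simp

lemma pos_def_mat_det_pos: "pos_def_mat n X \<Longrightarrow> det X > 0"
proof (induction n arbitrary: X)
  case 0
  then show ?case by (simp add: pos_def_mat_iff_quad_form det_dim_zero)
next
  case (Suc n)
  have X: "X \<in> carrier_mat (Suc n) (Suc n)" "transpose_mat X = X"
    using Suc.prems by (auto simp: pos_def_mat_iff_quad_form)
  have lead: "pos_def_mat n (lead_submat n X)"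
    using pos_def_mat_lead_submat[OF Suc.prems] by simp
  with Suc.IH have "det (lead_submat n X) > 0" by blast
  with pos_def_mat_Suc_iff[OF X] det_lead_schur_compl[OF X] lead Suc.prems show ?case by simp
qed

lemma sylvester_criterion:
  "pos_def_mat n X \<longleftrightarrow>
     X \<in> carrier_mat n n \<and> transpose_mat X = X \<and> (\<forall>k\<in>{1..n}. det (lead_submat k X) > 0)"
proof (induction n arbitrary: X)
  case 0
  then show ?case by (auto simp: pos_def_mat_iff_quad_form)
next
  case (Suc n)
  show ?case
  proof
    assume "pos_def_mat (Suc n) X"
    then show "X \<in> carrier_mat (Suc n) (Suc n) \<and> transpose_mat X = X \<and>
        (\<forall>k\<in>{1..Suc n}. det (lead_submat k X) > 0)"
      using pos_def_mat_det_pos[OF pos_def_mat_lead_submat] by (auto simp: pos_def_mat_iff_quad_form)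
  next
    assume H: "X \<in> carrier_mat (Suc n) (Suc n) \<and> transpose_mat X = X \<and>
        (\<forall>k\<in>{1..Suc n}. det (lead_submat k X) > 0)"
    then have X: "X \<in> carrier_mat (Suc n) (Suc n)" "transpose_mat X = X" by auto
    have lead: "pos_def_mat n (lead_submat n X)"
      unfolding Suc.IH
    proof (intro conjI ballI)
      show "transpose_mat (lead_submat n X) = lead_submat n X"
        using X by (auto intro!: eq_matI) (metis carrier_matD index_transpose_mat(1) less_SucI)
      fix k assume "k \<in> {1..n}"
      then show "det (lead_submat k (lead_submat n X)) > 0"
        using H by (simp add: lead_submat_lead_submat)
    qed simp
    have "det (lead_submat n X) > 0" using pos_def_mat_det_pos[OF lead] .
    moreover have "det X > 0"
      using H lead_submat_id[OF X(1)] by (metis atLeastAtMost_iff le_add1 le_refl plus_1_eq_Suc)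
    ultimately show "pos_def_mat (Suc n) X"
      using pos_def_mat_Suc_iff[OF X _ lead] det_lead_schur_compl[OF X]
      by (simp add: zero_less_mult_iff)
  qed
qed

section \<open>Schur complements of the last diagonal entry\<close>

lemma pos_def_mat_quad_form_pos:
  assumes "pos_def_mat n A" "i < n" "v i \<noteq> 0"
  shows "quad_form n A v > 0"
proof -
  have "\<forall>v. (\<exists>i<n. v i \<noteq> 0) \<longrightarrow> quad_form n A v > 0"
    using assms(1) by (simp add: pos_def_mat_iff_quad_form)
  with assms(2,3) show ?thesis by blast
qed

lemma pos_def_mat_diag_pos:
  assumes "pos_def_mat n Q" "i < n"
  shows "Q $$ (i,i) > 0"
proof -
  have "0 < quad_form n Q (\<lambda>j. if j = i then 1 else 0)"
    using assms by (intro pos_def_mat_quad_form_pos[of _ _ i]) simp_all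
  also have "\<dots> = Q $$ (i,i)"
    using assms(2) by (simp add: quad_form_def if_distrib[of "\<lambda>x. _ * x"] sum.delta cong: if_cong)
  finally show ?thesis .
qed

lemma quad_form_schur_compl:
  assumes "\<And>j. j < n \<Longrightarrow> Q $$ (n,j) = Q $$ (j,n)" and q: "Q $$ (n,n) \<noteq> 0"
  shows "quad_form (Suc n) Q v = quad_form n (schur_compl n Q) v
    + Q $$ (n,n) * (v n + (\<Sum>j<n. Q $$ (j,n) * v j) / Q $$ (n,n))\<^sup>2"
proof -
  define s where "s = (\<Sum>j<n. Q $$ (j,n) * v j)"
  have "quad_form n (schur_compl n Q) v
      = (\<Sum>i<n. \<Sum>j<n. Q $$ (i,j) * v i * v j - (Q $$ (i,n) * v i) * (Q $$ (j,n) * v j) / Q $$ (n,n))"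
    unfolding quad_form_def by (intro sum.cong refl) (simp add: schur_compl_def assms(1) field_simps)
  also have "\<dots> = quad_form n (lead_submat n Q) v - s\<^sup>2 / Q $$ (n,n)"
    by (simp add: quad_form_def s_def sum_subtractf sum_divide_distrib power2_eq_square
        sum_product ac_simps)
  moreover have "quad_form (Suc n) Q v
      = quad_form n (lead_submat n Q) v + 2 * v n * s + Q $$ (n,n) * (v n)\<^sup>2"
    using quad_form_Suc[of n Q v] assms(1) by (simp add: s_def ac_simps)
  moreover have "Q $$ (n,n) * (v n + s / Q $$ (n,n))\<^sup>2
      = Q $$ (n,n) * (v n)\<^sup>2 + 2 * v n * s + s\<^sup>2 / Q $$ (n,n)"
    using q by (simp add: field_simps power2_eq_square)
  ultimately show ?thesis by (simp add: s_def)
qed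

lemma pos_def_mat_schur_compl:
  assumes "pos_def_mat (Suc n) Q"
  shows "pos_def_mat n (schur_compl n Q)"
  unfolding pos_def_mat_iff_quad_form
proof (intro conjI allI impI)
  have sym: "\<And>i j. i < Suc n \<Longrightarrow> j < Suc n \<Longrightarrow> Q $$ (i,j) = Q $$ (j,i)"
    using pos_def_mat_symmetric[OF assms] .
  have q: "Q $$ (n,n) > 0" using pos_def_mat_diag_pos[OF assms] by simp
  show "transpose_mat (schur_compl n Q) = schur_compl n Q"
    by (rule eq_matI) (auto simp: schur_compl_def sym)
  fix v :: "nat \<Rightarrow> real"
  assume "\<exists>i<n. v i \<noteq> 0"
  define w where "w = v(n := - (\<Sum>j<n. Q $$ (j,n) * v j) / Q $$ (n,n))"
  have "\<exists>i<Suc n. w i \<noteq> 0" using \<open>\<exists>i<n. v i \<noteq> 0\<close> by (auto simp: w_def)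
  then have "0 < quad_form (Suc n) Q w" using assms unfolding pos_def_mat_iff_quad_form by blast
  also have "\<dots> = quad_form n (schur_compl n Q) v"
    using q by (subst quad_form_schur_compl) (auto simp: sym w_def intro: quad_form_cong)
  finally show "quad_form n (schur_compl n Q) v > 0" .
qed simp

lemma schur_compl_mult_lead_submat:
  assumes S: "S \<in> carrier_mat (Suc n) (Suc n)" and T: "T \<in> carrier_mat (Suc n) (Suc n)"
    and ST: "S * T = 1\<^sub>m (Suc n)" and q: "S $$ (n,n) \<noteq> 0"
  shows "schur_compl n S * lead_submat n T = 1\<^sub>m n"
proof (rule eq_matI)
  fix i j assume "i < dim_row (1\<^sub>m n)" "j < dim_col (1\<^sub>m n)"
  then have ij: "i < n" "j < n" by auto
  have ST_entry: "(\<Sum>k<Suc n. S $$ (i,k) * T $$ (k,j)) = (if i = j then 1 else 0)"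
    if "i < Suc n" "j < Suc n" for i j
    using arg_cong[OF ST, of "\<lambda>M. M $$ (i,j)"] that
    by (simp add: index_mult_mat_lessThan[OF S T] del: index_mult_mat)
  have "(schur_compl n S * lead_submat n T) $$ (i,j)
      = (\<Sum>k<n. schur_compl n S $$ (i,k) * lead_submat n T $$ (k,j))"
    by (rule index_mult_mat_lessThan[OF schur_compl_carrier lead_submat_carrier ij])
  also have "\<dots> = (\<Sum>k<n. S $$ (i,k) * T $$ (k,j) - S $$ (i,n) / S $$ (n,n) * (S $$ (n,k) * T $$ (k,j)))"
    using ij by (intro sum.cong refl) (simp add: schur_compl_def algebra_simps)
  also have "\<dots> = (\<Sum>k<n. S $$ (i,k) * T $$ (k,j))
      - S $$ (i,n) / S $$ (n,n) * (\<Sum>k<n. S $$ (n,k) * T $$ (k,j))"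
    by (simp add: sum_subtractf sum_distrib_left)
  also have "\<dots> = 1\<^sub>m n $$ (i,j)"
  proof -
    have "(\<Sum>k<n. S $$ (i,k) * T $$ (k,j)) = (if i = j then 1 else 0) - S $$ (i,n) * T $$ (n,j)"
      "(\<Sum>k<n. S $$ (n,k) * T $$ (k,j)) = - S $$ (n,n) * T $$ (n,j)"
      using ST_entry[of i j] ST_entry[of n j] ij by simp_all
    then show ?thesis using ij q by simp
  qed
  finally show "(schur_compl n S * lead_submat n T) $$ (i,j) = 1\<^sub>m n $$ (i,j)" .
qed (simp_all add: schur_compl_def)

lemma det_lead_submat_inverse:
  assumes S: "S \<in> carrier_mat (Suc n) (Suc n)" and T: "T \<in> carrier_mat (Suc n) (Suc n)"
    and ST: "S * T = 1\<^sub>m (Suc n)" and q: "S $$ (n,n) \<noteq> 0"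
  shows "det T = det (lead_submat n T) / S $$ (n,n)"
proof -
  have "det S * det T = 1" using det_mult[OF S T] ST by simp
  moreover have "det (schur_compl n S) * det (lead_submat n T) = 1"
    using det_mult[of "schur_compl n S" n "lead_submat n T"]
      schur_compl_mult_lead_submat[OF assms] by simp
  moreover have "det S = S $$ (n,n) * det (schur_compl n S)"
    by (rule det_schur_compl[OF S q])
  ultimately show ?thesis using q by (simp add: field_simps) (metis mult.assoc mult.commute mult_1_right)
qed

lemma left_inverse_symmetric:
  fixes A B :: "real mat"
  assumes A: "A \<in> carrier_mat n n" "transpose_mat A = A"
    and B: "B \<in> carrier_mat n n" and BA: "B * A = 1\<^sub>m n"
  shows "transpose_mat B = B"
proof -
  have AB: "A * B = 1\<^sub>m n" using mat_mult_left_right_inverse[OF B A(1) BA] .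
  have "transpose_mat B = transpose_mat B * (A * B)" using AB B by simp
  also have "\<dots> = transpose_mat (A * B) * B"
    using A B by (simp add: transpose_mult assoc_mult_mat[of _ n n A n B n])
  also have "\<dots> = B" using AB B by simp
  finally show ?thesis .
qed

lemma pos_def_mat_inverse:
  assumes A: "pos_def_mat n A" and B: "B \<in> carrier_mat n n" and BA: "B * A = 1\<^sub>m n"
  shows "pos_def_mat n B"
proof -
  have A': "A \<in> carrier_mat n n" "transpose_mat A = A"
    using A by (auto simp: pos_def_mat_iff_quad_form)
  have AB: "A * B = 1\<^sub>m n" using mat_mult_left_right_inverse[OF B A'(1) BA] .
  have B_sym: "transpose_mat B = B" by (rule left_inverse_symmetric[OF A' B BA])
  show ?thesis
    unfolding pos_def_mat_iff_quad_form
  proof (intro conjI allI impI B B_sym)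
    fix v :: "nat \<Rightarrow> real"
    assume "\<exists>i<n. v i \<noteq> 0"
    define z where "z = mat_vec n B v"
    have Az: "mat_vec n A z i = v i" if "i < n" for i
      unfolding z_def using mat_vec_inverse[OF A'(1) B AB that] .
    have "\<exists>i<n. z i \<noteq> 0"
    proof (rule ccontr)
      assume "\<not> (\<exists>i<n. z i \<noteq> 0)"
      then have "mat_vec n A z i = 0" for i by (simp add: mat_vec_def)
      with Az \<open>\<exists>i<n. v i \<noteq> 0\<close> show False by auto
    qed
    then have "0 < quad_form n A z" using A by (auto simp: pos_def_mat_iff_quad_form)
    also have "quad_form n A z = (\<Sum>i<n. z i * v i)"
      by (simp add: quad_form_eq_sum_mat_vec Az)
    also have "\<dots> = quad_form n B v"
      by (simp add: quad_form_eq_sum_mat_vec z_def mult.commute)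
    finally show "quad_form n B v > 0" .
  qed
qed

section \<open>Gaussian and gamma integrals\<close>

lemma nn_integral_exp_neg_square:
  assumes "q > 0"
  shows "(\<integral>\<^sup>+t. ennreal (exp (- q * (t - m)\<^sup>2)) \<partial>lborel) = ennreal (sqrt (pi / q))"
proof -
  define \<sigma> where "\<sigma> = sqrt (1 / (2 * q))"
  have \<sigma>: "\<sigma> > 0" "\<sigma>\<^sup>2 = 1 / (2 * q)" using assms by (simp_all add: \<sigma>_def)
  have "exp (- q * (t - m)\<^sup>2) = sqrt (pi / q) * normal_density m \<sigma> t" for t
  proof -
    have "sqrt (2 * pi * \<sigma>\<^sup>2) = sqrt (pi / q)" and "- (t - m)\<^sup>2 / (2 * \<sigma>\<^sup>2) = - q * (t - m)\<^sup>2"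
      using assms \<sigma>(2) by simp_all
    then show ?thesis using assms by (simp add: normal_density_def)
  qed
  then have "(\<integral>\<^sup>+t. ennreal (exp (- q * (t - m)\<^sup>2)) \<partial>lborel)
      = ennreal (sqrt (pi / q)) * (\<integral>\<^sup>+t. ennreal (normal_density m \<sigma> t) \<partial>lborel)"
    using assms by (simp add: ennreal_mult nn_integral_cmult)
  also have "(\<integral>\<^sup>+t. ennreal (normal_density m \<sigma> t) \<partial>lborel) = 1"
    using \<sigma> by (subst nn_integral_eq_integral) auto
  finally show ?thesis by simp
qed

lemma borel_measurable_quad_form:
  assumes "\<And>i. i < n \<Longrightarrow> (\<lambda>y. f y i) \<in> borel_measurable M"
  shows "(\<lambda>y. quad_form n Q (f y)) \<in> borel_measurable M"
  unfolding quad_form_def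
  by (intro borel_measurable_sum borel_measurable_times borel_measurable_const) (auto intro: assms)

lemma nn_integral_exp_neg_quad_form_last:
  assumes Q: "pos_def_mat (Suc n) Q"
  shows "(\<integral>\<^sup>+t. ennreal (exp (- quad_form (Suc n) Q (v(n := t - c)))) \<partial>lborel)
    = ennreal (sqrt (pi / Q $$ (n,n))) * ennreal (exp (- quad_form n (schur_compl n Q) v))"
proof -
  define q where "q = Q $$ (n,n)"
  define s where "s = (\<Sum>j<n. Q $$ (j,n) * v j)"
  have q: "q > 0" using pos_def_mat_diag_pos[OF Q] by (simp add: q_def)
  have S_upd: "quad_form n (schur_compl n Q) (v(n := t - c)) = quad_form n (schur_compl n Q) v" for t
    by (rule quad_form_cong) simp
  have "quad_form (Suc n) Q (v(n := t - c)) = quad_form n (schur_compl n Q) v + q * (t - (c - s / q))\<^sup>2"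
    for t
    using pos_def_mat_symmetric[OF Q] q
    by (subst quad_form_schur_compl) (simp_all add: S_upd q_def s_def algebra_simps)
  then have "exp (- quad_form (Suc n) Q (v(n := t - c)))
      = exp (- quad_form n (schur_compl n Q) v) * exp (- q * (t - (c - s / q))\<^sup>2)" for t
    by (simp add: mult_exp_exp)
  then have "(\<integral>\<^sup>+t. ennreal (exp (- quad_form (Suc n) Q (v(n := t - c)))) \<partial>lborel)
      = ennreal (exp (- quad_form n (schur_compl n Q) v)) * (\<integral>\<^sup>+t. ennreal (exp (- q * (t - (c - s / q))\<^sup>2)) \<partial>lborel)"
    by (simp only: ennreal_mult'[OF exp_ge_zero]) (rule nn_integral_cmult, simp)
  then show ?thesis
    using nn_integral_exp_neg_square[OF q] by (simp add: q_def mult.commute)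
qed

lemma nn_integral_exp_neg_quad_form:
  fixes \<iota> :: "nat \<Rightarrow> 'i"
  assumes "inj \<iota>" and "pos_def_mat n Q"
  shows "(\<integral>\<^sup>+y. ennreal (exp (- quad_form n Q (\<lambda>i. y (\<iota> i) - c i))) \<partial>PiM (\<iota> ` {..<n}) (\<lambda>_. lborel))
    = ennreal (pi powr (real n / 2) / sqrt (det Q))"
  using assms(2)
proof (induction n arbitrary: Q)
  case 0
  then have "det Q = 1" by (intro det_dim_zero) (simp add: pos_def_mat_iff_quad_form)
  then show ?case by (simp add: PiM_empty nn_integral_count_space_finite quad_form_def)
next
  case (Suc n)
  interpret product_sigma_finite "\<lambda>_::'i. lborel::real measure" by standard
  let ?M = "\<lambda>m. PiM (\<iota> ` {..<m}) (\<lambda>_::'i. lborel::real measure)"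
  define q where "q = Q $$ (n,n)"
  define S where "S = schur_compl n Q"
  define z where "z y i = y (\<iota> i) - c i" for y :: "'i \<Rightarrow> real" and i
  have q: "q > 0" using pos_def_mat_diag_pos[OF Suc.prems] by (simp add: q_def)
  have S: "pos_def_mat n S" using pos_def_mat_schur_compl[OF Suc.prems] by (simp add: S_def)
  have ins: "\<iota> ` {..<Suc n} = insert (\<iota> n) (\<iota> ` {..<n})" by (simp add: lessThan_Suc)
  have nin: "\<iota> n \<notin> \<iota> ` {..<n}" using assms(1) by (auto simp: inj_eq)
  have [measurable]: "(\<lambda>y. quad_form m P (z y)) \<in> borel_measurable (?M m)" for m P
  proof (intro borel_measurable_quad_form)
    fix i assume "i < m"
    then show "(\<lambda>y. z y i) \<in> borel_measurable (?M m)"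
      using measurable_component_singleton[of "\<iota> i" "\<iota> ` {..<m}" "\<lambda>_. lborel"]
      unfolding z_def by (intro borel_measurable_diff) simp_all
  qed
  have z_upd: "quad_form (Suc n) Q (z (y(\<iota> n := t))) = quad_form (Suc n) Q ((z y)(n := t - c n))"
    for y t
    using assms(1) by (intro quad_form_cong) (auto simp: z_def inj_eq)
  have "(\<integral>\<^sup>+y. ennreal (exp (- quad_form (Suc n) Q (z y))) \<partial>?M (Suc n))
      = (\<integral>\<^sup>+y. (\<integral>\<^sup>+t. ennreal (exp (- quad_form (Suc n) Q (z (y(\<iota> n := t))))) \<partial>lborel) \<partial>?M n)"
    by (rule product_nn_integral_insert[OF _ nin, folded ins]) measurable
  also have "\<dots> = (\<integral>\<^sup>+y. ennreal (sqrt (pi / q)) * ennreal (exp (- quad_form n S (z y))) \<partial>?M n)"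
    by (simp only: z_upd nn_integral_exp_neg_quad_form_last[OF Suc.prems] q_def S_def)
  also have "\<dots> = ennreal (sqrt (pi / q)) * ennreal (pi powr (real n / 2) / sqrt (det S))"
    using Suc.IH[OF S] by (subst nn_integral_cmult) (measurable, simp add: z_def[abs_def])
  also have "\<dots> = ennreal (pi powr (real (Suc n) / 2) / sqrt (det Q))"
  proof -
    have "det Q = q * det S"
      using det_schur_compl[of Q n] Suc.prems q by (simp add: pos_def_mat_iff_quad_form S_def q_def)
    moreover have "pi powr (real (Suc n) / 2) = sqrt pi * pi powr (real n / 2)"
      by (simp add: add_divide_distrib powr_add powr_half_sqrt)
    ultimately show ?thesis
      using q by (simp add: ennreal_mult'[symmetric] real_sqrt_divide real_sqrt_mult)
  qed
  finally show ?case by (simp add: z_def[abs_def])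
qed

lemma nn_integral_shifted_gamma:
  assumes l: "l > 0" and a: "a > 0"
  shows "(\<integral>\<^sup>+t. ennreal (indicator {r<..} t * (t - r) powr (a - 1) * exp (- l * (t - r))) \<partial>lborel)
    = ennreal (Gamma a / l powr a)"
proof -
  define g where "g t = indicator {r<..} t * (t - r) powr (a - 1) * exp (- l * (t - r))" for t :: real
  have g: "(\<lambda>t. ennreal (g t)) \<in> borel_measurable borel" unfolding g_def by measurable
  have g_affine: "g (r + x / l) = l powr (1 - a) * (indicator {0..} x * x powr (a - 1) / exp x)"
    for x
  proof (cases "x > 0")
    case True
    then have "(x / l) powr (a - 1) = l powr (1 - a) * x powr (a - 1)"
      using l by (simp add: powr_divide powr_minus_divide[symmetric] powr_diff field_simps)
    then show ?thesis using True l by (simp add: g_def exp_minus field_simps)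
  qed (use l in \<open>cases "x = 0", auto simp: g_def indicator_def zero_less_divide_iff\<close>)
  have "(\<integral>\<^sup>+t. ennreal (g t) \<partial>lborel) = ennreal (1 / l) * (\<integral>\<^sup>+x. ennreal (g (r + x / l)) \<partial>lborel)"
    using nn_integral_real_affine[OF g, of "1 / l" r] l by simp
  also have "(\<integral>\<^sup>+x. ennreal (g (r + x / l)) \<partial>lborel)
      = ennreal (l powr (1 - a)) * (\<integral>\<^sup>+x. ennreal (indicator {0..} x * x powr (a - 1) / exp x) \<partial>lborel)"
    by (simp only: g_affine ennreal_mult'[OF powr_ge_zero]) (rule nn_integral_cmult, measurable)
  also have "(\<integral>\<^sup>+x. ennreal (indicator {0..} x * x powr (a - 1) / exp x) \<partial>lborel) = ennreal (Gamma a)"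
    using Gamma_conv_nn_integral_real[OF a] by simp
  also have "ennreal (1 / l) * (ennreal (l powr (1 - a)) * ennreal (Gamma a)) = ennreal (Gamma a / l powr a)"
    using l Gamma_real_pos[OF a] by (simp add: ennreal_mult'[symmetric] powr_diff field_simps)
  finally show ?thesis by (simp add: g_def)
qed

section \<open>Integration over symmetric matrices\<close>

lemma index_sym_of: "i < p \<Longrightarrow> j < p \<Longrightarrow> sym_of p x $$ (i,j) = (if i \<le> j then x (i,j) else x (j,i))"
  by (simp add: sym_of_def)

lemma sym_of_carrier [simp]: "sym_of p x \<in> carrier_mat p p"
  by (simp add: sym_of_def)

lemma transpose_sym_of [simp]: "transpose_mat (sym_of p x) = sym_of p x"
  by (rule eq_matI) (auto simp: sym_of_def)

lemma borel_measurable_index_sym_of: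
  assumes "i < p" "j < p"
  shows "(\<lambda>x. sym_of p x $$ (i,j)) \<in> borel_measurable (sym_lebesgue p)"
proof -
  have "(\<lambda>x. x (min i j, max i j)) \<in> borel_measurable (sym_lebesgue p)"
    using measurable_component_singleton[of "(min i j, max i j)" "sym_idx p" "\<lambda>_. lborel"] assms
    by (simp add: sym_lebesgue_def sym_idx_def)
  moreover have "sym_of p x $$ (i,j) = x (min i j, max i j)" for x
    using assms by (simp add: index_sym_of min_def max_def)
  ultimately show ?thesis by simp
qed

lemma borel_measurable_det:
  fixes F :: "'b \<Rightarrow> real mat"
  assumes "\<And>x. F x \<in> carrier_mat m m"
    and "\<And>i j. i < m \<Longrightarrow> j < m \<Longrightarrow> (\<lambda>x. F x $$ (i,j)) \<in> borel_measurable M"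
  shows "(\<lambda>x. det (F x)) \<in> borel_measurable M"
proof -
  have "det (F x) = (\<Sum>\<pi>\<in>{\<pi>. \<pi> permutes {0..<m}}. of_int (sign \<pi>) * (\<Prod>i\<in>{0..<m}. F x $$ (i, \<pi> i)))"
    for x using assms(1)[of x] by (simp add: det_def)
  then have "(\<lambda>x. det (F x))
      = (\<lambda>x. \<Sum>\<pi>\<in>{\<pi>. \<pi> permutes {0..<m}}. of_int (sign \<pi>) * (\<Prod>i\<in>{0..<m}. F x $$ (i, \<pi> i)))"
    by simp
  also have "\<dots> \<in> borel_measurable M"
  proof (intro borel_measurable_sum borel_measurable_times borel_measurable_const borel_measurable_prod)
    fix \<pi> i assume "\<pi> \<in> {\<pi>. \<pi> permutes {0..<m}}" "i \<in> {0..<m}"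
    then show "(\<lambda>x. F x $$ (i, \<pi> i)) \<in> borel_measurable M"
      by (auto intro: assms(2) simp: permutes_in_image)
  qed
  finally show ?thesis .
qed

lemma borel_measurable_det_lead_submat_sym_of:
  "k \<le> p \<Longrightarrow> (\<lambda>x. det (lead_submat k (sym_of p x))) \<in> borel_measurable (sym_lebesgue p)"
  by (rule borel_measurable_det[of _ k]) (auto intro: borel_measurable_index_sym_of)

lemma mat_trace_mult:
  assumes "S \<in> carrier_mat p p" "X \<in> carrier_mat p p"
  shows "mat_trace (S * X) = (\<Sum>i<p. \<Sum>k<p. S $$ (i,k) * X $$ (k,i))"
  using assms by (auto simp: mat_trace_def scalar_prod_def atLeast0LessThan intro!: sum.cong)

lemma borel_measurable_mat_trace_mult_sym_of:
  "S \<in> carrier_mat p p \<Longrightarrow> (\<lambda>x. mat_trace (S * sym_of p x)) \<in> borel_measurable (sym_lebesgue p)"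
  by (simp add: mat_trace_mult)
    (intro borel_measurable_sum borel_measurable_times borel_measurable_const
      borel_measurable_index_sym_of, simp_all)

lemma spd_set_eq_lead_submat_det_pos:
  "spd_set p = {x \<in> space (sym_lebesgue p). \<forall>k\<in>{1..p}. det (lead_submat k (sym_of p x)) > 0}"
  unfolding spd_set_def using sylvester_criterion[of p] by auto

lemma sets_spd_set [measurable]: "spd_set p \<in> sets (sym_lebesgue p)"
  unfolding spd_set_eq_lead_submat_det_pos
proof (rule sets.sets_Collect_finite_All)
  fix k assume "k \<in> {1..p}"
  then have [measurable]: "(\<lambda>x. det (lead_submat k (sym_of p x))) \<in> borel_measurable (sym_lebesgue p)"
    by (simp add: borel_measurable_det_lead_submat_sym_of)
  show "{x \<in> space (sym_lebesgue p). 0 < det (lead_submat k (sym_of p x))} \<in> sets (sym_lebesgue p)"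
    by measurable
qed simp

definition above_diag_col :: "nat \<Rightarrow> (nat \<times> nat) set" where
  "above_diag_col n = (\<lambda>i. (i,n)) ` {..<n}"

text \<open>The independent entries of the bordered matrix \<open>[[sym_of n A, b], [b\<^sup>T, t]]\<close>;
  only the entries \<open>b (i,n)\<close> with \<open>i < n\<close> are used.\<close>

definition sym_border ::
    "nat \<Rightarrow> (nat \<times> nat \<Rightarrow> real) \<Rightarrow> (nat \<times> nat \<Rightarrow> real) \<Rightarrow> real \<Rightarrow> (nat \<times> nat \<Rightarrow> real)" where
  "sym_border n A b t = merge (sym_idx n) (insert (n,n) (above_diag_col n)) (A, b((n,n) := t))"

lemma sym_idx_Suc: "sym_idx (Suc n) = sym_idx n \<union> insert (n,n) (above_diag_col n)"
  by (auto simp: sym_idx_def above_diag_col_def less_Suc_eq)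

lemma sym_idx_disjoint: "sym_idx n \<inter> insert (n,n) (above_diag_col n) = {}"
  by (auto simp: sym_idx_def above_diag_col_def)

lemma finite_sym_idx: "finite (sym_idx n)"
  by (rule finite_subset[of _ "{..<n} \<times> {..<n}"]) (auto simp: sym_idx_def)

lemma lead_submat_sym_border: "lead_submat n (sym_of (Suc n) (sym_border n A b t)) = sym_of n A"
  using sym_idx_disjoint
  by (intro eq_matI) (auto simp: sym_of_def lead_submat_def sym_border_def sym_idx_def)

lemma index_sym_border:
  assumes "i < n"
  shows "sym_of (Suc n) (sym_border n A b t) $$ (i,n) = b (i,n)"
    and "sym_of (Suc n) (sym_border n A b t) $$ (n,i) = b (i,n)"
  using assms sym_idx_disjoint by (auto simp: sym_of_def sym_border_def above_diag_col_def)

lemma index_sym_border_diag: "sym_of (Suc n) (sym_border n A b t) $$ (n,n) = t"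
  using sym_idx_disjoint by (auto simp: sym_of_def sym_border_def)

lemma sym_border_space: "sym_border n A b t \<in> space (sym_lebesgue (Suc n))"
proof -
  have "sym_border n A b t \<in> PiE (sym_idx n \<union> insert (n,n) (above_diag_col n)) (\<lambda>_. UNIV)"
    unfolding sym_border_def by (subst PiE_cancel_merge[OF sym_idx_disjoint]) simp
  then show ?thesis by (simp add: sym_lebesgue_def sym_idx_Suc space_PiM)
qed

lemma nn_integral_sym_lebesgue_Suc:
  assumes f: "f \<in> borel_measurable (sym_lebesgue (Suc n))"
  shows "(\<integral>\<^sup>+x. f x \<partial>sym_lebesgue (Suc n)) =
    (\<integral>\<^sup>+A. (\<integral>\<^sup>+b. (\<integral>\<^sup>+t. f (sym_border n A b t) \<partial>lborel)
      \<partial>PiM (above_diag_col n) (\<lambda>_. lborel)) \<partial>sym_lebesgue n)"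
proof -
  interpret product_sigma_finite "\<lambda>_::nat \<times> nat. lborel::real measure" by standard
  let ?I = "sym_idx n" and ?J = "insert (n,n) (above_diag_col n)"
  have f': "f \<in> borel_measurable (PiM (?I \<union> ?J) (\<lambda>_. lborel))"
    using f by (simp add: sym_lebesgue_def sym_idx_Suc)
  have "(\<integral>\<^sup>+x. f x \<partial>sym_lebesgue (Suc n)) =
      (\<integral>\<^sup>+A. (\<integral>\<^sup>+w. f (merge ?I ?J (A, w)) \<partial>PiM ?J (\<lambda>_. lborel)) \<partial>PiM ?I (\<lambda>_. lborel))"
    unfolding sym_lebesgue_def sym_idx_Suc
    by (rule product_nn_integral_fold[OF sym_idx_disjoint finite_sym_idx _ f'])
      (simp add: above_diag_col_def)
  also have "\<dots> = (\<integral>\<^sup>+A. (\<integral>\<^sup>+b. (\<integral>\<^sup>+t. f (sym_border n A b t) \<partial>lborel)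
      \<partial>PiM (above_diag_col n) (\<lambda>_. lborel)) \<partial>PiM ?I (\<lambda>_. lborel))"
  proof (intro nn_integral_cong)
    fix A assume "A \<in> space (PiM ?I (\<lambda>_. lborel::real measure))"
    then have m: "(\<lambda>w. f (merge ?I ?J (A, w))) \<in> borel_measurable (PiM ?J (\<lambda>_. lborel))"
      by (intro measurable_compose[OF measurable_compose[OF measurable_Pair1' measurable_merge] f'])
    show "(\<integral>\<^sup>+w. f (merge ?I ?J (A, w)) \<partial>PiM ?J (\<lambda>_. lborel)) =
        (\<integral>\<^sup>+b. (\<integral>\<^sup>+t. f (sym_border n A b t) \<partial>lborel) \<partial>PiM (above_diag_col n) (\<lambda>_. lborel))"
      unfolding sym_border_def
      by (rule product_nn_integral_insert[OF _ _ m]) (auto simp: above_diag_col_def)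
  qed
  finally show ?thesis by (simp add: sym_lebesgue_def)
qed

section \<open>The bordering step\<close>

lemma mat_trace_schur_compl_mult:
  assumes "\<And>j. j < n \<Longrightarrow> S $$ (n,j) = S $$ (j,n)"
    and A: "A \<in> carrier_mat n n" "\<And>i j. i < n \<Longrightarrow> j < n \<Longrightarrow> A $$ (i,j) = A $$ (j,i)"
  shows "mat_trace (schur_compl n S * A)
    = (\<Sum>i<n. \<Sum>k<n. S $$ (i,k) * A $$ (k,i)) - quad_form n A (\<lambda>j. S $$ (j,n)) / S $$ (n,n)"
proof -
  have "mat_trace (schur_compl n S * A) = (\<Sum>i<n. \<Sum>k<n. schur_compl n S $$ (i,k) * A $$ (k,i))"
    by (rule mat_trace_mult[OF schur_compl_carrier A(1)])
  also have "\<dots> = (\<Sum>i<n. \<Sum>k<n. S $$ (i,k) * A $$ (k,i) - A $$ (i,k) * S $$ (i,n) * S $$ (k,n) / S $$ (n,n))"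
    using assms by (intro sum.cong refl) (simp add: schur_compl_def field_simps)
  finally show ?thesis by (simp add: quad_form_def sum_subtractf sum_divide_distrib)
qed

lemma quad_form_smult_inv_mat_shift:
  assumes A: "A \<in> carrier_mat n n" "transpose_mat A = A" "det A \<noteq> 0" and q: "q \<noteq> 0"
  shows "quad_form n (q \<cdot>\<^sub>m inv_mat A) (\<lambda>i. b i + mat_vec n A s i / q)
    = q * quad_form n (inv_mat A) b + 2 * (\<Sum>i<n. b i * s i) + quad_form n A s / q"
proof -
  note Ai = inv_mat_inverse[OF A(1,3)]
  have Ai_sym: "inv_mat A $$ (i,j) = inv_mat A $$ (j,i)" if "i < n" "j < n" for i j
    using index_sym_mat[OF left_inverse_symmetric[OF A(1,2) Ai(1,3)] Ai(1) that] .
  have Ai_A_s: "mat_vec n (inv_mat A) (mat_vec n A s) i = s i" if "i < n" for i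
    using mat_vec_inverse[OF Ai(1) A(1) Ai(3) that] .
  have "quad_form n (inv_mat A) (\<lambda>i. b i + 1 / q * mat_vec n A s i)
      = quad_form n (inv_mat A) b + 2 * (1 / q) * (\<Sum>i<n. b i * mat_vec n (inv_mat A) (mat_vec n A s) i)
        + (1 / q)\<^sup>2 * quad_form n (inv_mat A) (mat_vec n A s)"
    by (rule quad_form_add_scaled) (rule Ai_sym)
  moreover have "quad_form n (inv_mat A) (mat_vec n A s) = quad_form n A s"
    by (simp add: quad_form_eq_sum_mat_vec Ai_A_s mult.commute)
  ultimately show ?thesis
    using q Ai(1) by (simp add: Ai_A_s quad_form_smult power2_eq_square field_simps)
qed

lemma lead_schur_compl_sym_border:
  "lead_schur_compl n (sym_of (Suc n) (sym_border n A b t))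
    = t - quad_form n (inv_mat (sym_of n A)) (\<lambda>i. b (i,n))"
proof -
  have "quad_form n (inv_mat (sym_of n A)) (\<lambda>i. sym_of (Suc n) (sym_border n A b t) $$ (i,n))
      = quad_form n (inv_mat (sym_of n A)) (\<lambda>i. b (i,n))"
    by (rule quad_form_cong) (simp add: index_sym_border)
  then show ?thesis by (simp add: lead_schur_compl_def lead_submat_sym_border index_sym_border_diag)
qed

context
  fixes n :: nat and A :: "nat \<times> nat \<Rightarrow> real"
  assumes A_pos_def: "pos_def_mat n (sym_of n A)"
begin

lemma det_sym_border:
  "det (sym_of (Suc n) (sym_border n A b t))
    = det (sym_of n A) * (t - quad_form n (inv_mat (sym_of n A)) (\<lambda>i. b (i,n)))"
  using det_lead_schur_compl[where n = n and X = "sym_of (Suc n) (sym_border n A b t)"]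
    pos_def_mat_det_pos[OF A_pos_def]
  by (simp add: lead_submat_sym_border lead_schur_compl_sym_border)

lemma sym_border_mem_spd_set_iff:
  "sym_border n A b t \<in> spd_set (Suc n) \<longleftrightarrow> quad_form n (inv_mat (sym_of n A)) (\<lambda>i. b (i,n)) < t"
  using pos_def_mat_Suc_iff[where n = n and X = "sym_of (Suc n) (sym_border n A b t)"]
    pos_def_mat_det_pos[OF A_pos_def] A_pos_def
  by (simp add: spd_set_def sym_border_space lead_submat_sym_border lead_schur_compl_sym_border)

text \<open>Completing the square in \<open>b\<close>: this is what makes the integral over the last column
  Gaussian, and the leftover term turns \<open>S\<close> into its Schur complement.\<close>

lemma mat_trace_sym_border:
  assumes S: "pos_def_mat (Suc n) S"
  defines "Am \<equiv> sym_of n A" and "q \<equiv> S $$ (n,n)" and "s \<equiv> \<lambda>j. S $$ (j,n)"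
  shows "mat_trace (S * sym_of (Suc n) (sym_border n A b t))
    = mat_trace (schur_compl n S * Am)
      + quad_form n (q \<cdot>\<^sub>m inv_mat Am) (\<lambda>i. b (i,n) + mat_vec n Am s i / q)
      + q * (t - quad_form n (inv_mat Am) (\<lambda>i. b (i,n)))"
proof -
  define X where "X = sym_of (Suc n) (sym_border n A b t)"
  define trA where "trA = (\<Sum>i<n. \<Sum>k<n. S $$ (i,k) * Am $$ (k,i))"
  define bs where "bs = (\<Sum>i<n. b (i,n) * s i)"
  have q: "q > 0" using pos_def_mat_diag_pos[OF S] by (simp add: q_def)
  have S_sym: "S $$ (i,j) = S $$ (j,i)" if "i < Suc n" "j < Suc n" for i j
    using pos_def_mat_symmetric[OF S that] .
  have lead: "X $$ (k,i) = Am $$ (k,i)" if "k < n" "i < n" for k i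
    using arg_cong[OF lead_submat_sym_border[of n A b t], of "\<lambda>M. M $$ (k,i)"] that
    by (simp add: X_def Am_def)
  have "mat_trace (S * X) = (\<Sum>i<Suc n. \<Sum>k<Suc n. S $$ (i,k) * X $$ (k,i))"
    using S by (intro mat_trace_mult) (simp_all add: X_def pos_def_mat_iff_quad_form)
  also have "\<dots> = trA + 2 * bs + q * t"
  proof -
    have "(\<Sum>i<n. S $$ (i,n) * X $$ (n,i)) = bs" "(\<Sum>k<n. S $$ (n,k) * X $$ (k,n)) = bs"
      using S_sym[of n] by (simp_all add: X_def bs_def s_def index_sym_border mult.commute)
    moreover have "X $$ (n,n) = t" by (simp add: X_def index_sym_border_diag)
    ultimately show ?thesis by (simp add: trA_def lead sum.distrib q_def mult.commute)
  qed
  moreover have "mat_trace (schur_compl n S * Am) = trA - quad_form n Am s / q"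
    using S_sym by (simp add: mat_trace_schur_compl_mult Am_def index_sym_of trA_def q_def s_def)
  moreover have "quad_form n (q \<cdot>\<^sub>m inv_mat Am) (\<lambda>i. b (i,n) + mat_vec n Am s i / q)
      = q * quad_form n (inv_mat Am) (\<lambda>i. b (i,n)) + 2 * bs + quad_form n Am s / q"
    using pos_def_mat_det_pos[OF A_pos_def] q
    by (simp add: quad_form_smult_inv_mat_shift Am_def bs_def)
  ultimately show ?thesis using q by (simp add: X_def algebra_simps)
qed

lemma prod_det_lead_submat_sym_border:
  assumes "finite I" "\<forall>i\<in>I. k i \<le> Suc n"
    and r: "quad_form n (inv_mat (sym_of n A)) (\<lambda>i. b (i,n)) < t"
  shows "(\<Prod>i\<in>I. det (lead_submat (k i) (sym_of (Suc n) (sym_border n A b t))) powr \<nu> i)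
    = (\<Prod>i\<in>I. det (lead_submat (min (k i) n) (sym_of n A)) powr \<nu> i)
      * (t - quad_form n (inv_mat (sym_of n A)) (\<lambda>i. b (i,n))) powr (\<Sum>i\<in>{i\<in>I. Suc n \<le> k i}. \<nu> i)"
proof -
  define X where "X = sym_of (Suc n) (sym_border n A b t)"
  define r where "r = t - quad_form n (inv_mat (sym_of n A)) (\<lambda>i. b (i,n))"
  have "r > 0" using assms(3) by (simp add: r_def)
  have factor: "det (lead_submat (k i) X) powr \<nu> i
      = det (lead_submat (min (k i) n) (sym_of n A)) powr \<nu> i * (if Suc n \<le> k i then r powr \<nu> i else 1)"
    if "i \<in> I" for i
  proof (cases "Suc n \<le> k i")
    case True
    then have "k i = Suc n" using assms(2) that by (simp add: le_antisym)
    then show ?thesis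
      using det_sym_border[of b t] \<open>r > 0\<close> pos_def_mat_det_pos[OF A_pos_def]
      by (simp add: X_def r_def lead_submat_id powr_mult)
  next
    case False
    then show ?thesis
      using lead_submat_lead_submat[of "k i" n X] by (simp add: X_def lead_submat_sym_border)
  qed
  have "(\<Prod>i\<in>I. if Suc n \<le> k i then r powr \<nu> i else 1) = r powr (\<Sum>i\<in>{i\<in>I. Suc n \<le> k i}. \<nu> i)"
    using assms(1) \<open>r > 0\<close> by (simp add: prod.inter_filter[symmetric] powr_sum)
  then show ?thesis
    by (simp add: factor prod.distrib X_def[symmetric] r_def[symmetric])
qed

end

section \<open>The Wishart integral\<close>

definition wishart_kernel ::
    "nat \<Rightarrow> real mat \<Rightarrow> real \<Rightarrow> ('i \<Rightarrow> nat) \<Rightarrow> ('i \<Rightarrow> real) \<Rightarrow> 'i set \<Rightarrow> (nat \<times> nat \<Rightarrow> real) \<Rightarrow> real"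
  where
  "wishart_kernel p S \<beta> k \<nu> I x = indicator (spd_set p) x *
     ((\<Prod>i\<in>I. det (lead_submat (k i) (sym_of p x)) powr \<nu> i) *
      det (sym_of p x) powr (\<beta> - (real p + 1) / 2) * exp (- mat_trace (S * sym_of p x)))"

definition wishart_const :: "nat \<Rightarrow> real mat \<Rightarrow> real \<Rightarrow> ('i \<Rightarrow> nat) \<Rightarrow> ('i \<Rightarrow> real) \<Rightarrow> 'i set \<Rightarrow> real"
  where
  "wishart_const p \<Sigma> \<beta> k \<nu> I = pi powr (real p * (real p - 1) / 4) *
     (\<Prod>m=1..p. Gamma (\<beta> + (\<Sum>i\<in>{i\<in>I. m \<le> k i}. \<nu> i) - (real m - 1) / 2)) *
     det \<Sigma> powr \<beta> * (\<Prod>i\<in>I. det (lead_submat (k i) \<Sigma>) powr \<nu> i)"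

lemma wishart_kernel_nonneg: "wishart_kernel p S \<beta> k \<nu> I x \<ge> 0"
  by (auto simp: wishart_kernel_def intro!: mult_nonneg_nonneg prod_nonneg)

lemma borel_measurable_wishart_kernel:
  assumes "S \<in> carrier_mat p p" "\<forall>i\<in>I. k i \<le> p"
  shows "wishart_kernel p S \<beta> k \<nu> I \<in> borel_measurable (sym_lebesgue p)"
proof -
  have [measurable]: "(\<lambda>x. det (lead_submat (k i) (sym_of p x))) \<in> borel_measurable (sym_lebesgue p)"
    if "i \<in> I" for i
    using assms(2) that by (simp add: borel_measurable_det_lead_submat_sym_of)
  have [measurable]: "(\<lambda>x. det (sym_of p x)) \<in> borel_measurable (sym_lebesgue p)"
    using borel_measurable_det_lead_submat_sym_of[of p p] by (simp add: lead_submat_id)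
  have [measurable]: "(\<lambda>x. mat_trace (S * sym_of p x)) \<in> borel_measurable (sym_lebesgue p)"
    using assms(1) by (rule borel_measurable_mat_trace_mult_sym_of)
  show ?thesis unfolding wishart_kernel_def[abs_def] by measurable
qed

lemma wishart_kernel_sym_border:
  fixes b :: "nat \<times> nat \<Rightarrow> real" and \<beta> :: real and \<nu> :: "'i \<Rightarrow> real"
  assumes S: "pos_def_mat (Suc n) S" and A: "A \<in> spd_set n"
    and I: "finite I" "\<forall>i\<in>I. k i \<le> Suc n"
  defines "Am \<equiv> sym_of n A" and "q \<equiv> S $$ (n,n)"
    and "r \<equiv> quad_form n (inv_mat (sym_of n A)) (\<lambda>i. b (i,n))"
    and "a \<equiv> \<beta> + (\<Sum>i\<in>{i\<in>I. Suc n \<le> k i}. \<nu> i) - real n / 2"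
  shows "wishart_kernel (Suc n) S \<beta> k \<nu> I (sym_border n A b t)
    = wishart_kernel n (schur_compl n S) \<beta> (\<lambda>i. min (k i) n) \<nu> I A / sqrt (det Am)
      * exp (- quad_form n (q \<cdot>\<^sub>m inv_mat Am) (\<lambda>i. b (i,n) + mat_vec n Am (\<lambda>j. S $$ (j,n)) i / q))
      * (indicator {r<..} t * (t - r) powr (a - 1) * exp (- q * (t - r)))"
proof -
  have Am: "pos_def_mat n Am" using A by (simp add: spd_set_def Am_def)
  show ?thesis
  proof (cases "r < t")
    case False
    then have "sym_border n A b t \<notin> spd_set (Suc n)"
      using sym_border_mem_spd_set_iff[OF Am[unfolded Am_def]] by (simp add: r_def)
    with False show ?thesis by (simp add: wishart_kernel_def)
  next
    case True
    define T where "T = (\<Sum>i\<in>{i\<in>I. Suc n \<le> k i}. \<nu> i)"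
    define PA where "PA = (\<Prod>i\<in>I. det (lead_submat (min (k i) n) Am) powr \<nu> i)"
    define G where "G = quad_form n (q \<cdot>\<^sub>m inv_mat Am) (\<lambda>i. b (i,n) + mat_vec n Am (\<lambda>j. S $$ (j,n)) i / q)"
    have d: "det Am > 0" using pos_def_mat_det_pos[OF Am] .
    have "sym_border n A b t \<in> spd_set (Suc n)"
      using sym_border_mem_spd_set_iff[OF Am[unfolded Am_def]] True by (simp add: r_def)
    then have "wishart_kernel (Suc n) S \<beta> k \<nu> I (sym_border n A b t)
        = PA * (t - r) powr T * (det Am * (t - r)) powr (\<beta> - (real (Suc n) + 1) / 2)
          * exp (- (mat_trace (schur_compl n S * Am) + G + q * (t - r)))"
      using True prod_det_lead_submat_sym_border[OF Am[unfolded Am_def] I, of b t \<nu>]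
        det_sym_border[OF Am[unfolded Am_def]] mat_trace_sym_border[OF Am[unfolded Am_def] S]
      by (simp add: wishart_kernel_def PA_def T_def G_def Am_def q_def r_def)
    also have "\<dots> = PA * det Am powr (\<beta> - (real n + 1) / 2) * exp (- mat_trace (schur_compl n S * Am))
        / sqrt (det Am) * exp (- G) * ((t - r) powr (a - 1) * exp (- q * (t - r)))"
    proof -
      define e where "e = \<beta> - (real (Suc n) + 1) / 2"
      have t_pow: "(t - r) powr T * (t - r) powr e = (t - r) powr (a - 1)"
        by (simp add: a_def T_def e_def powr_add[symmetric] field_simps)
      have det_pow: "det Am powr e = det Am powr (\<beta> - (real n + 1) / 2) / sqrt (det Am)"
      proof -
        have "e = (\<beta> - (real n + 1) / 2) - 1 / 2" by (simp add: e_def field_simps)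
        then show ?thesis using d by (simp add: powr_diff powr_half_sqrt)
      qed
      have det_t_pow: "(det Am * (t - r)) powr e = det Am powr e * (t - r) powr e"
        using d True by (simp add: powr_mult)
      have exp_split: "exp (- (mat_trace (schur_compl n S * Am) + G + q * (t - r)))
          = exp (- mat_trace (schur_compl n S * Am)) * exp (- G) * exp (- q * (t - r))"
        by (simp add: exp_add[symmetric])
      show ?thesis
        unfolding e_def[symmetric] det_t_pow exp_split det_pow t_pow[symmetric]
        by (simp add: mult_ac)
    qed
    also have "\<dots> = wishart_kernel n (schur_compl n S) \<beta> (\<lambda>i. min (k i) n) \<nu> I A / sqrt (det Am)
        * exp (- G) * (indicator {r<..} t * (t - r) powr (a - 1) * exp (- q * (t - r)))"
      using A True by (simp add: wishart_kernel_def PA_def Am_def)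
    finally show ?thesis by (simp add: G_def)
  qed
qed

lemma nn_integral_sym_border_gaussian:
  assumes "pos_def_mat n Am" "q > 0"
  shows "(\<integral>\<^sup>+b. ennreal (exp (- quad_form n (q \<cdot>\<^sub>m inv_mat Am) (\<lambda>i. b (i,n) + c i)))
      \<partial>PiM (above_diag_col n) (\<lambda>_. lborel))
    = ennreal (pi powr (real n / 2) * sqrt (det Am) / q powr (real n / 2))"
proof -
  have Am: "Am \<in> carrier_mat n n" "det Am > 0"
    using assms(1) pos_def_mat_det_pos by (auto simp: pos_def_mat_iff_quad_form)
  note Ai = inv_mat_inverse[OF Am(1)]
  have Q: "pos_def_mat n (q \<cdot>\<^sub>m inv_mat Am)"
    using Am(2) by (intro pos_def_mat_smult pos_def_mat_inverse[OF assms(1)] Ai assms(2)) simp_all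
  have "det (inv_mat Am) * det Am = 1"
    using det_mult[OF Ai(1) Am(1)] Ai(3) Am(2) by simp
  then have "det (q \<cdot>\<^sub>m inv_mat Am) = q ^ n / det Am"
    using Ai(1) Am(2) by (simp add: field_simps)
  then have sqrt_det: "sqrt (det (q \<cdot>\<^sub>m inv_mat Am)) = q powr (real n / 2) / sqrt (det Am)"
    using assms(2) Am(2)
    by (simp add: real_sqrt_divide powr_half_sqrt[symmetric] powr_realpow[symmetric] powr_powr
        del: det_smult)
  have inj: "inj (\<lambda>i::nat. (i,n))" by (auto simp: inj_def)
  have "(\<integral>\<^sup>+b. ennreal (exp (- quad_form n (q \<cdot>\<^sub>m inv_mat Am) (\<lambda>i. b (i,n) + c i)))
      \<partial>PiM (above_diag_col n) (\<lambda>_. lborel))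
    = (\<integral>\<^sup>+y. ennreal (exp (- quad_form n (q \<cdot>\<^sub>m inv_mat Am) (\<lambda>i. y ((\<lambda>i. (i,n)) i) - - c i)))
      \<partial>PiM ((\<lambda>i. (i,n)) ` {..<n}) (\<lambda>_. lborel))"
    by (simp add: above_diag_col_def)
  also have "\<dots> = ennreal (pi powr (real n / 2) / sqrt (det (q \<cdot>\<^sub>m inv_mat Am)))"
    by (rule nn_integral_exp_neg_quad_form[OF inj Q])
  also have "\<dots> = ennreal (pi powr (real n / 2) * sqrt (det Am) / q powr (real n / 2))"
    using Am(2) by (simp add: sqrt_det field_simps del: det_smult)
  finally show ?thesis .
qed

lemma borel_measurable_exp_quad_form_above_diag_col:
  "(\<lambda>b. ennreal (exp (- quad_form n Q (\<lambda>i. b (i,n) + c i))))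
    \<in> borel_measurable (PiM (above_diag_col n) (\<lambda>_. lborel))"
proof -
  have "(\<lambda>b. b (i,n)) \<in> borel_measurable (PiM (above_diag_col n) (\<lambda>_. lborel))" if "i < n" for i
    using measurable_component_singleton[of "(i,n)" "above_diag_col n" "\<lambda>_. lborel"] that
    by (simp add: above_diag_col_def)
  then have [measurable]: "(\<lambda>b. quad_form n Q (\<lambda>i. b (i,n) + c i))
      \<in> borel_measurable (PiM (above_diag_col n) (\<lambda>_. lborel))"
    by (intro borel_measurable_quad_form borel_measurable_add) simp_all
  show ?thesis by measurable
qed

lemma nn_integral_wishart_kernel_sym_border_diag:
  fixes \<nu> :: "'i \<Rightarrow> real"
  assumes S: "pos_def_mat (Suc n) S" and A: "A \<in> spd_set n" and I: "finite I" "\<forall>i\<in>I. k i \<le> Suc n"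
  defines "T \<equiv> (\<Sum>i\<in>{i\<in>I. Suc n \<le> k i}. \<nu> i)" and "Am \<equiv> sym_of n A" and "q \<equiv> S $$ (n,n)"
  assumes a: "\<beta> + T - real n / 2 > 0"
  shows "(\<integral>\<^sup>+t. ennreal (wishart_kernel (Suc n) S \<beta> k \<nu> I (sym_border n A b t)) \<partial>lborel)
    = ennreal (wishart_kernel n (schur_compl n S) \<beta> (\<lambda>i. min (k i) n) \<nu> I A / sqrt (det Am)
        * Gamma (\<beta> + T - real n / 2) / q powr (\<beta> + T - real n / 2))
      * ennreal (exp (- quad_form n (q \<cdot>\<^sub>m inv_mat Am) (\<lambda>i. b (i,n) + mat_vec n Am (\<lambda>j. S $$ (j,n)) i / q)))"
proof -
  define W where "W = wishart_kernel n (schur_compl n S) \<beta> (\<lambda>i. min (k i) n) \<nu> I A"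
  define G where "G = quad_form n (q \<cdot>\<^sub>m inv_mat Am) (\<lambda>i. b (i,n) + mat_vec n Am (\<lambda>j. S $$ (j,n)) i / q)"
  define r where "r = quad_form n (inv_mat Am) (\<lambda>i. b (i,n))"
  have q: "q > 0" using pos_def_mat_diag_pos[OF S] by (simp add: q_def)
  have "pos_def_mat n Am" using A by (simp add: spd_set_def Am_def)
  then have d: "det Am > 0" by (rule pos_def_mat_det_pos)
  have nonneg: "0 \<le> W / sqrt (det Am) * exp (- G)" using d by (simp add: W_def wishart_kernel_nonneg)
  note kernel = wishart_kernel_sym_border[OF S A I, where b = b and \<beta> = \<beta> and \<nu> = \<nu>,
      folded W_def Am_def q_def, folded G_def r_def T_def]
  have "(\<integral>\<^sup>+t. ennreal (wishart_kernel (Suc n) S \<beta> k \<nu> I (sym_border n A b t)) \<partial>lborel)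
      = ennreal (W / sqrt (det Am) * exp (- G))
        * (\<integral>\<^sup>+t. ennreal (indicator {r<..} t * (t - r) powr (\<beta> + T - real n / 2 - 1)
          * exp (- q * (t - r))) \<partial>lborel)"
    by (simp only: kernel ennreal_mult'[OF nonneg]) (rule nn_integral_cmult, measurable)
  then show ?thesis
    using nn_integral_shifted_gamma[OF q a] nonneg d q Gamma_real_pos[OF a]
    by (simp add: W_def G_def ennreal_mult'[symmetric] mult_ac)
qed

lemma nn_integral_wishart_kernel_sym_border:
  fixes \<nu> :: "'i \<Rightarrow> real"
  assumes S: "pos_def_mat (Suc n) S" and I: "finite I" "\<forall>i\<in>I. k i \<le> Suc n"
    and A: "A \<in> space (sym_lebesgue n)"
  defines "T \<equiv> (\<Sum>i\<in>{i\<in>I. Suc n \<le> k i}. \<nu> i)"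
  assumes a: "\<beta> + T - real n / 2 > 0"
  shows "(\<integral>\<^sup>+b. (\<integral>\<^sup>+t. ennreal (wishart_kernel (Suc n) S \<beta> k \<nu> I (sym_border n A b t)) \<partial>lborel)
      \<partial>PiM (above_diag_col n) (\<lambda>_. lborel))
    = ennreal (Gamma (\<beta> + T - real n / 2) * pi powr (real n / 2) / S $$ (n,n) powr (\<beta> + T)
        * wishart_kernel n (schur_compl n S) \<beta> (\<lambda>i. min (k i) n) \<nu> I A)"
proof (cases "A \<in> spd_set n")
  case False
  have "sym_border n A b t \<notin> spd_set (Suc n)" for b t
    using False pos_def_mat_lead_submat[of "Suc n" "sym_of (Suc n) (sym_border n A b t)" n] A
    by (auto simp: spd_set_def lead_submat_sym_border)
  with False show ?thesis by (simp add: wishart_kernel_def)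
next
  case True
  define Am where "Am = sym_of n A"
  define q where "q = S $$ (n,n)"
  define W where "W = wishart_kernel n (schur_compl n S) \<beta> (\<lambda>i. min (k i) n) \<nu> I A"
  have Am: "pos_def_mat n Am" using True by (simp add: spd_set_def Am_def)
  have q: "q > 0" using pos_def_mat_diag_pos[OF S] by (simp add: q_def)
  have W: "W \<ge> 0" by (simp add: W_def wishart_kernel_nonneg)
  have d: "det Am > 0" using pos_def_mat_det_pos[OF Am] .
  have "(\<integral>\<^sup>+b. (\<integral>\<^sup>+t. ennreal (wishart_kernel (Suc n) S \<beta> k \<nu> I (sym_border n A b t)) \<partial>lborel)
      \<partial>PiM (above_diag_col n) (\<lambda>_. lborel))
    = ennreal (W / sqrt (det Am) * Gamma (\<beta> + T - real n / 2) / q powr (\<beta> + T - real n / 2))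
      * ennreal (pi powr (real n / 2) * sqrt (det Am) / q powr (real n / 2))"
    using nn_integral_cmult[OF borel_measurable_exp_quad_form_above_diag_col]
      nn_integral_sym_border_gaussian[OF Am q]
    by (simp add: nn_integral_wishart_kernel_sym_border_diag[OF S True I a[unfolded T_def]]
        W_def Am_def q_def T_def)
  also have "\<dots> = ennreal (Gamma (\<beta> + T - real n / 2) * pi powr (real n / 2) / q powr (\<beta> + T) * W)"
  proof -
    have "q powr (\<beta> + T - real n / 2) * q powr (real n / 2) = q powr (\<beta> + T)"
      by (simp add: powr_add[symmetric])
    then show ?thesis
      using W d q Gamma_real_pos[OF a] by (simp add: ennreal_mult'[symmetric] field_simps)
  qed
  finally show ?thesis by (simp add: W_def q_def)
qed

lemma prod_det_lead_submat_Suc: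
  assumes \<Sigma>: "pos_def_mat (Suc n) \<Sigma>" and I: "finite I" "\<forall>i\<in>I. k i \<le> Suc n"
    and q: "q > 0" and det: "det \<Sigma> = det (lead_submat n \<Sigma>) / q"
  shows "(\<Prod>i\<in>I. det (lead_submat (k i) \<Sigma>) powr \<nu> i)
    = (\<Prod>i\<in>I. det (lead_submat (min (k i) n) (lead_submat n \<Sigma>)) powr \<nu> i)
      / q powr (\<Sum>i\<in>{i\<in>I. Suc n \<le> k i}. \<nu> i)"
proof -
  have \<Sigma>_carrier: "\<Sigma> \<in> carrier_mat (Suc n) (Suc n)"
    using \<Sigma> by (simp add: pos_def_mat_iff_quad_form)
  have lead_pos: "det (lead_submat n \<Sigma>) > 0"
    using pos_def_mat_det_pos[OF pos_def_mat_lead_submat[OF \<Sigma>]] by simp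
  have factor: "det (lead_submat (k i) \<Sigma>) powr \<nu> i
      = det (lead_submat (min (k i) n) (lead_submat n \<Sigma>)) powr \<nu> i
        / (if Suc n \<le> k i then q powr \<nu> i else 1)"
    if "i \<in> I" for i
  proof (cases "Suc n \<le> k i")
    case True
    then have "k i = Suc n" using I(2) that by (simp add: le_antisym)
    then show ?thesis
      using lead_pos q
      by (simp add: det lead_submat_id[OF \<Sigma>_carrier] lead_submat_lead_submat powr_divide)
  next
    case False
    then show ?thesis by (simp add: lead_submat_lead_submat)
  qed
  have "(\<Prod>i\<in>I. if Suc n \<le> k i then q powr \<nu> i else 1) = q powr (\<Sum>i\<in>{i\<in>I. Suc n \<le> k i}. \<nu> i)"
    using I(1) q by (simp add: prod.inter_filter[symmetric] powr_sum)
  then show ?thesis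
    by (simp add: factor prod_dividef)
qed

lemma wishart_const_Suc:
  fixes \<nu> :: "'i \<Rightarrow> real"
  assumes \<Sigma>: "pos_def_mat (Suc n) \<Sigma>" and S: "S \<in> carrier_mat (Suc n) (Suc n)" "S * \<Sigma> = 1\<^sub>m (Suc n)"
    and I: "finite I" "\<forall>i\<in>I. k i \<le> Suc n"
  defines "T \<equiv> (\<Sum>i\<in>{i\<in>I. Suc n \<le> k i}. \<nu> i)"
  shows "wishart_const (Suc n) \<Sigma> \<beta> k \<nu> I
    = Gamma (\<beta> + T - real n / 2) * pi powr (real n / 2) / S $$ (n,n) powr (\<beta> + T)
      * wishart_const n (lead_submat n \<Sigma>) \<beta> (\<lambda>i. min (k i) n) \<nu> I"
proof -
  define q where "q = S $$ (n,n)"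
  have \<Sigma>_carrier: "\<Sigma> \<in> carrier_mat (Suc n) (Suc n)"
    using \<Sigma> by (simp add: pos_def_mat_iff_quad_form)
  have q: "q > 0"
    using pos_def_mat_diag_pos[OF pos_def_mat_inverse[OF \<Sigma> S]] by (simp add: q_def)
  have det: "det \<Sigma> = det (lead_submat n \<Sigma>) / q"
    using det_lead_submat_inverse[OF S(1) \<Sigma>_carrier S(2)] q by (simp add: q_def)
  have lead_pos: "det (lead_submat n \<Sigma>) > 0"
    using pos_def_mat_det_pos[OF pos_def_mat_lead_submat[OF \<Sigma>]] by simp
  have gammas: "(\<Prod>m=1..Suc n. Gamma (\<beta> + (\<Sum>i\<in>{i\<in>I. m \<le> k i}. \<nu> i) - (real m - 1) / 2))
      = Gamma (\<beta> + T - real n / 2)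
        * (\<Prod>m=1..n. Gamma (\<beta> + (\<Sum>i\<in>{i\<in>I. m \<le> min (k i) n}. \<nu> i) - (real m - 1) / 2))"
  proof -
    have "(\<Prod>m=1..n. Gamma (\<beta> + (\<Sum>i\<in>{i\<in>I. m \<le> min (k i) n}. \<nu> i) - (real m - 1) / 2))
        = (\<Prod>m=1..n. Gamma (\<beta> + (\<Sum>i\<in>{i\<in>I. m \<le> k i}. \<nu> i) - (real m - 1) / 2))"
    proof (rule prod.cong[OF refl])
      fix m assume "m \<in> {1..n}"
      then have "{i\<in>I. m \<le> min (k i) n} = {i\<in>I. m \<le> k i}" by auto
      then show "Gamma (\<beta> + (\<Sum>i\<in>{i\<in>I. m \<le> min (k i) n}. \<nu> i) - (real m - 1) / 2)
          = Gamma (\<beta> + (\<Sum>i\<in>{i\<in>I. m \<le> k i}. \<nu> i) - (real m - 1) / 2)" by (simp only:)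
    qed
    then show ?thesis by (simp add: T_def mult.commute)
  qed
  have "pi powr (real (Suc n) * (real (Suc n) - 1) / 4)
      = pi powr (real n / 2) * pi powr (real n * (real n - 1) / 4)"
    by (simp add: powr_add[symmetric] field_simps)
  moreover have "det \<Sigma> powr \<beta> = det (lead_submat n \<Sigma>) powr \<beta> / q powr \<beta>"
    using lead_pos q by (simp add: det powr_divide)
  moreover have "q powr \<beta> * q powr T = q powr (\<beta> + T)"
    by (simp add: powr_add)
  ultimately show ?thesis
    using prod_det_lead_submat_Suc[OF \<Sigma> I q det, of \<nu>]
    by (simp add: wishart_const_def gammas q_def[symmetric] T_def[symmetric] field_simps)
qed

lemma nn_integral_wishart_kernel_Suc:
  fixes \<nu> :: "'i \<Rightarrow> real"
  assumes S: "pos_def_mat (Suc n) S" and I: "finite I" "\<forall>i\<in>I. k i \<le> Suc n"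
  defines "T \<equiv> (\<Sum>i\<in>{i\<in>I. Suc n \<le> k i}. \<nu> i)"
  assumes a: "\<beta> + T - real n / 2 > 0"
  shows "(\<integral>\<^sup>+x. ennreal (wishart_kernel (Suc n) S \<beta> k \<nu> I x) \<partial>sym_lebesgue (Suc n))
    = ennreal (Gamma (\<beta> + T - real n / 2) * pi powr (real n / 2) / S $$ (n,n) powr (\<beta> + T))
      * (\<integral>\<^sup>+A. ennreal (wishart_kernel n (schur_compl n S) \<beta> (\<lambda>i. min (k i) n) \<nu> I A) \<partial>sym_lebesgue n)"
proof -
  define K where "K = Gamma (\<beta> + T - real n / 2) * pi powr (real n / 2) / S $$ (n,n) powr (\<beta> + T)"
  have K: "K \<ge> 0"
    using a pos_def_mat_diag_pos[OF S] by (simp add: K_def Gamma_real_pos less_imp_le)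
  have S_carrier: "S \<in> carrier_mat (Suc n) (Suc n)" using S by (simp add: pos_def_mat_iff_quad_form)
  have [measurable]: "wishart_kernel n (schur_compl n S) \<beta> (\<lambda>i. min (k i) n) \<nu> I \<in> borel_measurable (sym_lebesgue n)"
    by (rule borel_measurable_wishart_kernel) simp_all
  have "(\<integral>\<^sup>+x. ennreal (wishart_kernel (Suc n) S \<beta> k \<nu> I x) \<partial>sym_lebesgue (Suc n))
      = (\<integral>\<^sup>+A. (\<integral>\<^sup>+b. (\<integral>\<^sup>+t. ennreal (wishart_kernel (Suc n) S \<beta> k \<nu> I (sym_border n A b t)) \<partial>lborel)
          \<partial>PiM (above_diag_col n) (\<lambda>_. lborel)) \<partial>sym_lebesgue n)"
    using borel_measurable_wishart_kernel[OF S_carrier I(2)]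
    by (intro nn_integral_sym_lebesgue_Suc) measurable
  also have "\<dots> = (\<integral>\<^sup>+A. ennreal K * ennreal (wishart_kernel n (schur_compl n S) \<beta> (\<lambda>i. min (k i) n) \<nu> I A)
      \<partial>sym_lebesgue n)"
    using nn_integral_wishart_kernel_sym_border[OF S I] a K
    by (intro nn_integral_cong) (simp add: K_def T_def ennreal_mult'[symmetric])
  also have "\<dots> = ennreal K
      * (\<integral>\<^sup>+A. ennreal (wishart_kernel n (schur_compl n S) \<beta> (\<lambda>i. min (k i) n) \<nu> I A) \<partial>sym_lebesgue n)"
    by (rule nn_integral_cmult) measurable
  finally show ?thesis by (simp add: K_def)
qed

theorem nn_integral_wishart_kernel:
  fixes k :: "'i \<Rightarrow> nat" and \<nu> :: "'i \<Rightarrow> real"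
  assumes "finite I"
  shows "pos_def_mat p \<Sigma> \<Longrightarrow> S \<in> carrier_mat p p \<Longrightarrow> S * \<Sigma> = 1\<^sub>m p \<Longrightarrow> \<forall>i\<in>I. k i \<le> p \<Longrightarrow>
    \<forall>m\<in>{1..p}. \<beta> + (\<Sum>i\<in>{i\<in>I. m \<le> k i}. \<nu> i) > (real m - 1) / 2 \<Longrightarrow>
    (\<integral>\<^sup>+x. ennreal (wishart_kernel p S \<beta> k \<nu> I x) \<partial>sym_lebesgue p) = ennreal (wishart_const p \<Sigma> \<beta> k \<nu> I)"
proof (induction p arbitrary: \<Sigma> S k)
  case 0
  interpret product_sigma_finite "\<lambda>_::nat \<times> nat. lborel::real measure" by standard
  have "sym_lebesgue 0 = PiM {} (\<lambda>_. lborel)" by (simp add: sym_lebesgue_def sym_idx_def)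
  moreover have "wishart_kernel 0 S \<beta> k \<nu> I (\<lambda>_. undefined) = 1"
  proof -
    have "(\<lambda>_. undefined) \<in> spd_set 0"
      by (simp add: spd_set_def sym_lebesgue_def sym_idx_def pos_def_mat_iff_quad_form)
    moreover have "mat_trace (S * sym_of 0 (\<lambda>_. undefined)) = 0"
      using "0.prems"(2) by (simp add: mat_trace_def)
    ultimately show ?thesis
      using "0.prems"(4) by (simp add: wishart_kernel_def det_dim_zero)
  qed
  moreover have "wishart_const 0 \<Sigma> \<beta> k \<nu> I = 1"
    using "0.prems"(1,4) by (simp add: wishart_const_def det_dim_zero pos_def_mat_iff_quad_form)
  ultimately show ?case by (simp add: nn_integral_empty)
next
  case (Suc n)
  define T where "T = (\<Sum>i\<in>{i\<in>I. Suc n \<le> k i}. \<nu> i)"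
  have S: "pos_def_mat (Suc n) S" using pos_def_mat_inverse[OF Suc.prems(1-3)] .
  have a: "\<beta> + T - real n / 2 > 0"
    using Suc.prems(5) by (auto simp: T_def dest!: bspec[of _ _ "Suc n"])
  have "(\<integral>\<^sup>+x. ennreal (wishart_kernel n (schur_compl n S) \<beta> (\<lambda>i. min (k i) n) \<nu> I x) \<partial>sym_lebesgue n)
      = ennreal (wishart_const n (lead_submat n \<Sigma>) \<beta> (\<lambda>i. min (k i) n) \<nu> I)"
  proof (rule Suc.IH)
    show "pos_def_mat n (lead_submat n \<Sigma>)" using pos_def_mat_lead_submat[OF Suc.prems(1)] by simp
    show "schur_compl n S * lead_submat n \<Sigma> = 1\<^sub>m n"
      using schur_compl_mult_lead_submat[OF Suc.prems(2) _ Suc.prems(3)] Suc.prems(1)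
        pos_def_mat_diag_pos[OF S, of n] by (simp add: pos_def_mat_iff_quad_form)
    have "{i\<in>I. m \<le> min (k i) n} = {i\<in>I. m \<le> k i}" if "m \<le> n" for m
      using that by auto
    then show "\<forall>m\<in>{1..n}. (real m - 1) / 2 < \<beta> + (\<Sum>i\<in>{i\<in>I. m \<le> min (k i) n}. \<nu> i)"
      using Suc.prems(5) by auto
  qed simp_all
  then show ?case
    using nn_integral_wishart_kernel_Suc[OF S assms Suc.prems(4) a[unfolded T_def]]
      wishart_const_Suc[OF Suc.prems(1-3) assms Suc.prems(4), where \<nu> = \<nu> and \<beta> = \<beta>]
      a pos_def_mat_diag_pos[OF S, of n]
    by (simp add: T_def ennreal_mult'[symmetric] Gamma_real_pos less_imp_le)
qed

corollary integral_wishart_kernel: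
  fixes k :: "'i \<Rightarrow> nat" and \<nu> :: "'i \<Rightarrow> real"
  assumes "finite I" "pos_def_mat p \<Sigma>" "S \<in> carrier_mat p p" "S * \<Sigma> = 1\<^sub>m p" "\<forall>i\<in>I. k i \<le> p"
    and "\<forall>m\<in>{1..p}. \<beta> + (\<Sum>i\<in>{i\<in>I. m \<le> k i}. \<nu> i) > (real m - 1) / 2"
  shows "(\<integral>x. wishart_kernel p S \<beta> k \<nu> I x \<partial>sym_lebesgue p) = wishart_const p \<Sigma> \<beta> k \<nu> I"
proof -
  have "wishart_const p \<Sigma> \<beta> k \<nu> I \<ge> 0"
    using assms(6)
    by (auto simp: wishart_const_def intro!: mult_nonneg_nonneg prod_nonneg less_imp_le[OF Gamma_real_pos])
  then show ?thesis
    using integral_eq_nn_integral[OF borel_measurable_wishart_kernel[OF assms(3,5)]]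
      nn_integral_wishart_kernel[OF assms]
    by (simp add: wishart_kernel_nonneg)
qed

lemma mat_trace_uminus: "A \<in> carrier_mat n n \<Longrightarrow> mat_trace (- A) = - mat_trace A"
  by (simp add: mat_trace_def sum_negf)

lemma multigamma_eq_prod_Gamma:
  assumes "\<gamma> > (real m - 1) / 2"
  shows "multigamma m \<gamma> = pi powr (real m * (real m - 1) / 4) * (\<Prod>j=1..m. Gamma (\<gamma> - (real j - 1) / 2))"
proof -
  let ?f = "wishart_kernel m (1\<^sub>m m) \<gamma> (\<lambda>_::nat. 0) (\<lambda>_. 0) {}"
  have "(\<lambda>x. indicator (spd_set m) x * (det (sym_of m x) powr (\<gamma> - (real m + 1) / 2) * etr (- sym_of m x)))
      = ?f"
    by (rule ext)
      (simp add: wishart_kernel_def etr_def mat_trace_uminus[OF sym_of_carrier]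
        left_mult_one_mat[OF sym_of_carrier])
  then have "multigamma m \<gamma> = (\<integral>x. ?f x \<partial>sym_lebesgue m)"
    by (simp add: multigamma_def)
  also have "\<dots> = wishart_const m (1\<^sub>m m) \<gamma> (\<lambda>_::nat. 0) (\<lambda>_. 0) {}"
    using assms by (intro integral_wishart_kernel) (auto simp: pos_def_mat_one)
  finally show ?thesis by (simp add: wishart_const_def)
qed

lemma prod_Gamma_multigamma_pos:
  assumes "\<gamma> > (real m - 1) / 2"
  shows "(\<Prod>j=1..m. Gamma (\<gamma> - (real j - 1) / 2)) > 0"
proof (intro prod_pos Gamma_real_pos)
  fix j assume "j \<in> {1..m}"
  then have "real j \<le> real m" by simp
  then show "0 < \<gamma> - (real j - 1) / 2" using assms by (simp add: field_simps)
qed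

lemma wishart_density_nonneg: "wishart_density p \<alpha> \<Sigma> x \<ge> 0"
proof -
  have "multigamma p (\<alpha> / 2) \<ge> 0"
    unfolding multigamma_def by (intro integral_nonneg_AE AE_I2) (simp add: etr_def)
  then show ?thesis
    unfolding wishart_density_def by (intro mult_nonneg_nonneg divide_nonneg_nonneg) (simp_all add: etr_def)
qed

lemma wishart_density_mult_prod_det:
  assumes \<Sigma>: "pos_def_mat p \<Sigma>"
  shows "wishart_density p \<alpha> \<Sigma> x * (\<Prod>i\<in>I. det (lead_submat (k i) (sym_of p x)) powr \<nu> i)
    = wishart_kernel p ((1 / 2) \<cdot>\<^sub>m inv_mat \<Sigma>) (\<alpha> / 2) k \<nu> I x
      / (det (2 \<cdot>\<^sub>m \<Sigma>) powr (\<alpha> / 2) * multigamma p (\<alpha> / 2))"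
proof -
  have "\<Sigma> \<in> carrier_mat p p" using \<Sigma> by (simp add: pos_def_mat_iff_quad_form)
  then have "inv_mat \<Sigma> \<in> carrier_mat p p"
    using inv_mat_inverse pos_def_mat_det_pos[OF \<Sigma>] by simp
  then have "- ((1 / 2) \<cdot>\<^sub>m inv_mat \<Sigma>) * sym_of p x = - ((1 / 2) \<cdot>\<^sub>m inv_mat \<Sigma> * sym_of p x)"
    by (intro uminus_mult_left_mat) (simp_all add: sym_of_def)
  then have "etr (- ((1 / 2) \<cdot>\<^sub>m inv_mat \<Sigma>) * sym_of p x) = exp (- mat_trace ((1 / 2) \<cdot>\<^sub>m inv_mat \<Sigma> * sym_of p x))"
    using mat_trace_uminus[of "(1 / 2) \<cdot>\<^sub>m inv_mat \<Sigma> * sym_of p x" p] \<open>inv_mat \<Sigma> \<in> carrier_mat p p\<close>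
    by (simp add: etr_def mult_carrier_mat[of _ p p _ p])
  then show ?thesis
    by (simp add: wishart_density_def wishart_kernel_def ac_simps)
qed

lemma half_inv_mat_mult_double:
  assumes "pos_def_mat p \<Sigma>"
  shows "(1 / 2) \<cdot>\<^sub>m inv_mat \<Sigma> * (2 \<cdot>\<^sub>m \<Sigma>) = 1\<^sub>m p"
proof -
  have \<Sigma>: "\<Sigma> \<in> carrier_mat p p" using assms by (simp add: pos_def_mat_iff_quad_form)
  have "det \<Sigma> \<noteq> 0" using pos_def_mat_det_pos[OF assms] by simp
  note \<Sigma>_inv = inv_mat_inverse[OF \<Sigma> this]
  have "(1 / 2) \<cdot>\<^sub>m inv_mat \<Sigma> * (2 \<cdot>\<^sub>m \<Sigma>) = (1 / 2) \<cdot>\<^sub>m (inv_mat \<Sigma> * (2 \<cdot>\<^sub>m \<Sigma>))"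
    by (rule mult_smult_assoc_mat[OF \<Sigma>_inv(1), of _ p]) (simp add: \<Sigma>)
  also have "inv_mat \<Sigma> * (2 \<cdot>\<^sub>m \<Sigma>) = 2 \<cdot>\<^sub>m 1\<^sub>m p"
    using mult_smult_distrib[OF \<Sigma>_inv(1) \<Sigma>] \<Sigma>_inv(3) by simp
  also have "(1 / 2) \<cdot>\<^sub>m (2 \<cdot>\<^sub>m 1\<^sub>m p) = (1\<^sub>m p :: real mat)" by (rule eq_matI) auto
  finally show ?thesis .
qed

lemma expectation_prod_det_lead_submat_wishart:
  assumes W: "wishart_distributed M p \<alpha> \<Sigma> X" and \<alpha>: "\<alpha> > real p - 1" and \<Sigma>: "pos_def_mat p \<Sigma>"
    and I: "finite I" "\<forall>i\<in>I. k i \<le> p" "\<forall>i\<in>I. \<nu> i \<ge> 0"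
  shows "prob_space.expectation M (\<lambda>\<omega>. \<Prod>i\<in>I. det (lead_submat (k i) (sym_of p (X \<omega>))) powr \<nu> i)
    = wishart_const p (2 \<cdot>\<^sub>m \<Sigma>) (\<alpha> / 2) k \<nu> I / (det (2 \<cdot>\<^sub>m \<Sigma>) powr (\<alpha> / 2) * multigamma p (\<alpha> / 2))"
proof -
  define g where "g x = (\<Prod>i\<in>I. det (lead_submat (k i) (sym_of p x)) powr \<nu> i)" for x
  have g: "g \<in> borel_measurable (sym_lebesgue p)"
    unfolding g_def using I(2)
    by (intro borel_measurable_prod powr_real_measurable borel_measurable_const
        borel_measurable_det_lead_submat_sym_of) auto
  have "\<forall>m\<in>{1..p}. \<alpha> / 2 + (\<Sum>i\<in>{i\<in>I. m \<le> k i}. \<nu> i) > (real m - 1) / 2"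
  proof
    fix m assume "m \<in> {1..p}"
    then have "real m \<le> real p" by simp
    moreover have "(\<Sum>i\<in>{i\<in>I. m \<le> k i}. \<nu> i) \<ge> 0" using I(3) by (intro sum_nonneg) auto
    ultimately show "\<alpha> / 2 + (\<Sum>i\<in>{i\<in>I. m \<le> k i}. \<nu> i) > (real m - 1) / 2"
      using \<alpha> by (simp add: field_simps)
  qed
  then have integral: "(\<integral>x. wishart_kernel p ((1 / 2) \<cdot>\<^sub>m inv_mat \<Sigma>) (\<alpha> / 2) k \<nu> I x \<partial>sym_lebesgue p)
      = wishart_const p (2 \<cdot>\<^sub>m \<Sigma>) (\<alpha> / 2) k \<nu> I"
    using \<Sigma> pos_def_mat_det_pos[OF \<Sigma>] inv_mat_inverse[of \<Sigma> p]
    by (intro integral_wishart_kernel I(1,2) pos_def_mat_smult half_inv_mat_mult_double)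
      (simp_all add: pos_def_mat_iff_quad_form)
  have "prob_space.expectation M (\<lambda>\<omega>. g (X \<omega>)) = (\<integral>x. wishart_density p \<alpha> \<Sigma> x * g x \<partial>sym_lebesgue p)"
    using W g by (intro distributed_integral[symmetric]) (simp_all add: wishart_distributed_def wishart_density_nonneg)
  also have "\<dots> = wishart_const p (2 \<cdot>\<^sub>m \<Sigma>) (\<alpha> / 2) k \<nu> I / (det (2 \<cdot>\<^sub>m \<Sigma>) powr (\<alpha> / 2) * multigamma p (\<alpha> / 2))"
    by (simp add: g_def wishart_density_mult_prod_det[OF \<Sigma>] integral)
  finally show ?thesis by (simp add: g_def)
qed

lemma lead_submat_smult: "A \<in> carrier_mat p p \<Longrightarrow> k \<le> p \<Longrightarrow> lead_submat k (c \<cdot>\<^sub>m A) = c \<cdot>\<^sub>m lead_submat k A"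
  by (auto intro!: eq_matI)

lemma wishart_const_div_normalization:
  assumes \<Sigma>: "pos_def_mat p \<Sigma>" and \<alpha>: "\<alpha> > real p - 1" and k: "\<forall>i\<in>I. k i \<le> p"
  shows "wishart_const p (2 \<cdot>\<^sub>m \<Sigma>) (\<alpha> / 2) k \<nu> I / (det (2 \<cdot>\<^sub>m \<Sigma>) powr (\<alpha> / 2) * multigamma p (\<alpha> / 2))
    = (\<Prod>i\<in>I. det (2 \<cdot>\<^sub>m lead_submat (k i) \<Sigma>) powr \<nu> i)
      * ((\<Prod>m=1..p. Gamma (\<alpha> / 2 + (\<Sum>i\<in>{i\<in>I. m \<le> k i}. \<nu> i) - (real m - 1) / 2))
        / (\<Prod>m=1..p. Gamma (\<alpha> / 2 - (real m - 1) / 2)))"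
proof -
  have \<alpha>': "\<alpha> / 2 > (real p - 1) / 2" using \<alpha> by simp
  have "det (2 \<cdot>\<^sub>m \<Sigma>) > 0" using pos_def_mat_det_pos[OF pos_def_mat_smult[OF \<Sigma>]] by simp
  then have det: "det (2 \<cdot>\<^sub>m \<Sigma>) powr (\<alpha> / 2) > 0" by (simp del: det_smult)
  have "(\<Prod>m=1..p. Gamma (\<alpha> / 2 - (real m - 1) / 2)) > 0"
    by (rule prod_Gamma_multigamma_pos[OF \<alpha>'])
  moreover have "(\<Prod>i\<in>I. det (lead_submat (k i) (2 \<cdot>\<^sub>m \<Sigma>)) powr \<nu> i)
      = (\<Prod>i\<in>I. det (2 \<cdot>\<^sub>m lead_submat (k i) \<Sigma>) powr \<nu> i)"
    using k \<Sigma> by (intro prod.cong refl) (simp add: lead_submat_smult[of \<Sigma> p] pos_def_mat_iff_quad_form del: det_smult)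
  ultimately show ?thesis
    using det by (simp add: wishart_const_def multigamma_eq_prod_Gamma[OF \<alpha>'] field_simps del: det_smult)
qed

section \<open>Grouping the Gamma factors into blocks\<close>

lemma prod_atLeastAtMost_sum_blocks:
  fixes F :: "nat \<Rightarrow> 'a::comm_monoid_mult" and ps :: "nat \<Rightarrow> nat"
  shows "(\<Prod>m=1..(\<Sum>k=1..d. ps k). F m) = (\<Prod>i=1..d. \<Prod>j=1..ps i. F ((\<Sum>k=1..<i. ps k) + j))"
proof (induction d)
  case 0
  then show ?case by simp
next
  case (Suc d)
  define N where "N = (\<Sum>k=1..d. ps k)"
  have "(\<Prod>m=1..N + ps (Suc d). F m) = (\<Prod>m=1..N. F m) * (\<Prod>m=N + 1..N + ps (Suc d). F m)"
    by (rule prod.ub_add_nat) simp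
  also have "(\<Prod>m=N + 1..N + ps (Suc d). F m) = (\<Prod>j=1..ps (Suc d). F (N + j))"
    using prod.shift_bounds_cl_nat_ivl[of F 1 N "ps (Suc d)"] by (simp add: add.commute)
  finally show ?case
    using Suc.IH by (simp add: N_def atLeastLessThanSuc_atLeastAtMost)
qed

lemma set_partial_sums_ge_eq:
  fixes ps :: "nat \<Rightarrow> nat"
  assumes "i \<in> {1..d}" "j \<in> {1..ps i}"
  shows "{l\<in>{1..d}. (\<Sum>k=1..<i. ps k) + j \<le> (\<Sum>k=1..l. ps k)} = {i..d}"
proof (intro equalityI subsetI)
  fix l assume l: "l \<in> {l\<in>{1..d}. (\<Sum>k=1..<i. ps k) + j \<le> (\<Sum>k=1..l. ps k)}"
  show "l \<in> {i..d}"
  proof (rule ccontr)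
    assume "l \<notin> {i..d}"
    then have "(\<Sum>k=1..l. ps k) \<le> (\<Sum>k=1..<i. ps k)" using l by (intro sum_mono2) auto
    then show False using l assms(2) by auto
  qed
next
  fix l assume l: "l \<in> {i..d}"
  have "(\<Sum>k=1..<i. ps k) + ps i = (\<Sum>k=1..i. ps k)"
    using assms(1) by (simp add: sum.atLeastLessThan_Suc atLeastLessThanSuc_atLeastAtMost[symmetric])
  also have "\<dots> \<le> (\<Sum>k=1..l. ps k)" using l by (intro sum_mono2) auto
  finally show "l \<in> {l\<in>{1..d}. (\<Sum>k=1..<i. ps k) + j \<le> (\<Sum>k=1..l. ps k)}"
    using l assms by auto
qed

lemma prod_Gamma_ratio_eq_prod_multigamma_ratio:
  fixes d :: nat and ps :: "nat \<Rightarrow> nat" and \<alpha> :: real and \<nu> :: "nat \<Rightarrow> real"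
  defines "p \<equiv> (\<Sum>k=1..d. ps k)"
  assumes \<alpha>: "\<alpha> > real p - 1" and \<nu>: "\<forall>i\<in>{1..d}. \<nu> i \<ge> 0"
  shows "(\<Prod>m=1..p. Gamma (\<alpha> / 2 + (\<Sum>i\<in>{i\<in>{1..d}. m \<le> (\<Sum>k=1..i. ps k)}. \<nu> i) - (real m - 1) / 2))
      / (\<Prod>m=1..p. Gamma (\<alpha> / 2 - (real m - 1) / 2))
    = (\<Prod>i=1..d. multigamma (ps i) (\<alpha> / 2 - (\<Sum>k=1..<i. real (ps k) / 2) + (\<Sum>k=i..d. \<nu> k))
        / multigamma (ps i) (\<alpha> / 2 - (\<Sum>k=1..<i. real (ps k) / 2)))"
proof -
  define num where "num m = Gamma (\<alpha> / 2 + (\<Sum>i\<in>{i\<in>{1..d}. m \<le> (\<Sum>k=1..i. ps k)}. \<nu> i) - (real m - 1) / 2)"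
    for m
  define den where "den m = Gamma (\<alpha> / 2 - (real m - 1) / 2)" for m :: nat
  define m0 where "m0 i = (\<Sum>k=1..<i. ps k)" for i
  have block: "(\<Prod>j=1..ps i. num (m0 i + j)) / (\<Prod>j=1..ps i. den (m0 i + j))
    = multigamma (ps i) (\<alpha> / 2 - (\<Sum>k=1..<i. real (ps k) / 2) + (\<Sum>k=i..d. \<nu> k))
      / multigamma (ps i) (\<alpha> / 2 - (\<Sum>k=1..<i. real (ps k) / 2))"
    if i: "i \<in> {1..d}" for i
  proof -
    have m0: "(\<Sum>k=1..<i. real (ps k) / 2) = real (m0 i) / 2"
      by (simp add: m0_def sum_divide_distrib)
    have "m0 i + ps i = (\<Sum>k=1..i. ps k)"
      using i by (simp add: m0_def sum.atLeastLessThan_Suc atLeastLessThanSuc_atLeastAtMost[symmetric])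
    also have "\<dots> \<le> p" using i by (auto simp: p_def intro!: sum_mono2)
    finally have den_pos: "\<alpha> / 2 - real (m0 i) / 2 > (real (ps i) - 1) / 2"
      using \<alpha> by (simp add: field_simps)
    have "(\<Sum>k=i..d. \<nu> k) \<ge> 0" using \<nu> i by (intro sum_nonneg) auto
    then have num_pos: "\<alpha> / 2 - real (m0 i) / 2 + (\<Sum>k=i..d. \<nu> k) > (real (ps i) - 1) / 2"
      using den_pos by linarith
    have "(\<Prod>j=1..ps i. num (m0 i + j))
        = (\<Prod>j=1..ps i. Gamma (\<alpha> / 2 - real (m0 i) / 2 + (\<Sum>k=i..d. \<nu> k) - (real j - 1) / 2))"
      using set_partial_sums_ge_eq[OF i]
      by (intro prod.cong refl) (simp add: num_def m0_def field_simps)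
    moreover have "(\<Prod>j=1..ps i. den (m0 i + j))
        = (\<Prod>j=1..ps i. Gamma (\<alpha> / 2 - real (m0 i) / 2 - (real j - 1) / 2))"
      unfolding den_def by (intro prod.cong refl arg_cong[where f = Gamma]) (simp add: field_simps)
    ultimately show ?thesis
      unfolding m0 by (simp add: multigamma_eq_prod_Gamma[OF num_pos] multigamma_eq_prod_Gamma[OF den_pos])
  qed
  have "(\<Prod>m=1..p. num m) / (\<Prod>m=1..p. den m)
      = (\<Prod>i=1..d. (\<Prod>j=1..ps i. num (m0 i + j)) / (\<Prod>j=1..ps i. den (m0 i + j)))"
    unfolding p_def prod_atLeastAtMost_sum_blocks m0_def prod_dividef ..
  also have "\<dots> = (\<Prod>i=1..d. multigamma (ps i) (\<alpha> / 2 - (\<Sum>k=1..<i. real (ps k) / 2) + (\<Sum>k=i..d. \<nu> k))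
        / multigamma (ps i) (\<alpha> / 2 - (\<Sum>k=1..<i. real (ps k) / 2)))"
    by (rule prod.cong[OF refl]) (rule block)
  finally show ?thesis by (simp only: num_def den_def)
qed

theorem theorem1:
  fixes d :: nat and ps :: "nat \<Rightarrow> nat" and \<alpha> :: real and \<Sigma> :: "real mat"
    and M :: "'a measure" and X :: "'a \<Rightarrow> (nat \<times> nat) \<Rightarrow> real" and \<nu> :: "nat \<Rightarrow> real"
  defines "p \<equiv> (\<Sum>k = 1..d. ps k)"
  assumes "prob_space M"
    and "\<alpha> > real p - 1"
    and "pos_def_mat p \<Sigma>"
    and "wishart_distributed M p \<alpha> \<Sigma> X"
    and "\<forall>i \<in> {1..d}. \<nu> i \<ge> 0"
  shows "prob_space.expectation M
           (\<lambda>\<omega>. \<Prod>i = 1..d. det (lead_submat (\<Sum>k = 1..i. ps k) (sym_of p (X \<omega>))) powr \<nu> i)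
       = (\<Prod>i = 1..d. det (2 \<cdot>\<^sub>m lead_submat (\<Sum>k = 1..i. ps k) \<Sigma>) powr \<nu> i *
            multigamma (ps i) (\<alpha> / 2 - (\<Sum>k = 1..<i. real (ps k) / 2) + (\<Sum>k = i..d. \<nu> k))
            / multigamma (ps i) (\<alpha> / 2 - (\<Sum>k = 1..<i. real (ps k) / 2)))"
proof -
  define n where "n i = (\<Sum>k=1..i. ps k)" for i
  have n: "\<forall>i\<in>{1..d}. n i \<le> p" by (auto simp: n_def p_def intro!: sum_mono2)
  have "prob_space.expectation M (\<lambda>\<omega>. \<Prod>i=1..d. det (lead_submat (n i) (sym_of p (X \<omega>))) powr \<nu> i)
      = wishart_const p (2 \<cdot>\<^sub>m \<Sigma>) (\<alpha> / 2) n \<nu> {1..d}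
        / (det (2 \<cdot>\<^sub>m \<Sigma>) powr (\<alpha> / 2) * multigamma p (\<alpha> / 2))"
    by (rule expectation_prod_det_lead_submat_wishart[OF assms(5,3,4) _ n assms(6)]) simp
  also have "\<dots> = (\<Prod>i=1..d. det (2 \<cdot>\<^sub>m lead_submat (n i) \<Sigma>) powr \<nu> i)
      * ((\<Prod>m=1..p. Gamma (\<alpha> / 2 + (\<Sum>i\<in>{i\<in>{1..d}. m \<le> n i}. \<nu> i) - (real m - 1) / 2))
        / (\<Prod>m=1..p. Gamma (\<alpha> / 2 - (real m - 1) / 2)))"
    by (rule wishart_const_div_normalization[OF assms(4,3) n])
  also have "\<dots> = (\<Prod>i = 1..d. det (2 \<cdot>\<^sub>m lead_submat (n i) \<Sigma>) powr \<nu> i *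
            multigamma (ps i) (\<alpha> / 2 - (\<Sum>k = 1..<i. real (ps k) / 2) + (\<Sum>k = i..d. \<nu> k))
            / multigamma (ps i) (\<alpha> / 2 - (\<Sum>k = 1..<i. real (ps k) / 2)))"
    using prod_Gamma_ratio_eq_prod_multigamma_ratio[of ps d \<alpha> \<nu>] assms(3,6)
    by (simp add: n_def p_def prod.distrib prod_dividef times_divide_eq_right)
  finally show ?thesis by (simp add: n_def)
qed

end
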